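(* Consider the age-agnostic randomized policy $\pi=(f_0,f_1)$, where $f_0,f_1>0$ with $p_sf_0<1$ and $p_sf_1<1$, and set $f^i_\alpha=p_sf_i$, $\bar f^i_\alpha=1-p_sf_i$ for $i\in\{0,1\}$. Let MC1 denote the process $\{(X_t,\hat X_t)\}_{t\ge1}$ and MC2 the process $\{S_t\}_{t\ge1}=\{(X_t,\hat X_t,\Delta_t)\}_{t\ge1}$ induced by $\pi$. Then: (i) MC1 is a finite-state ergodic Markov chain with stationary distribution $\nu_{0,0}=q(\bar p f^0_\alpha+pf^1_\alpha)(q+\bar q f^1_\alpha)/\zeta$, $\nu_{0,1}=pq\bar f^1_\alpha(qf^0_\alpha+\bar q f^1_\alpha)/\zeta$, $\nu_{1,0}=pq\bar f^0_\alpha(\bar p f^0_\alpha+pf^1_\alpha)/\zeta$, $\nu_{1,1}=p(qf^0_\alpha+\bar q f^1_\alpha)(p+\bar p f^0_\alpha)/\zeta$, where $\zeta=(p+q)\big(qf^0_\alpha+pf^1_\alpha+(1-p-q)f^0_\alpha f^1_\alpha\big)$. (ii) MC2 is a countable-state, irreducible, positive recurrent Markov chain with stationary distribution $\nu_{0,0,0}=\nu_{0,0}$, $\nu_{1,1,0}=\nu_{1,1}$, $\nu_{1,0,k}=p\bar f^0_\alpha(\bar q\bar f^1_\alpha)^{k-1}\nu_{0,0}$ and $\nu_{0,1,k}=q\bar f^1_\alpha(\bar p\bar f^0_\alpha)^{k-1}\nu_{1,1}$ for $k\ge1$, and the average cost of $\pi$ is $$\mathcal L(\pi)=\frac{\beta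 p\bar f^0_\alpha\nu_{0,0}}{(1-\bar q\bar f^1_\alpha)^2}+\frac{(1-\beta)q\bar f^1_\alpha\nu_{1,1}}{(1-\bar p\bar f^0_\alpha)^2}+\frac{\lambda(qf_0+pf_1)}{p+q}.$$ (iii) There exists a state $z\in\mathcal S$ such that the expected first passage time of MC2 from any state $i\in\mathcal S\setminus\{z\}$ to $z$ is finite. (iv) For the state $z$ in (iii), the expected first passage cost (accumulated expected per-stage cost until hitting $z$) from any $i\in\mathcal S\setminus\{z\}$ to $z$ is finite.
   Context: Fix $p,q\in(0,1)$, $\bar p=1-p$, $\bar q=1-q$. The source $\{X_t\}_{t\ge1}$ is a Markov chain on $\{0,1\}$ ($0$ = normal, $1$ = alarm) with $\Pr[X_{t+1}=1\mid X_t=0]=p$, $\Pr[X_{t+1}=0\mid X_t=1]=q$. The channel $\{H_t\}$ is i.i.d. Bernoulli with success probability $p_s\in(0,1]$, independent of the source; $p_f=1-p_s$. At each slot $t$ the sensor chooses $A_t\in\{0,1\}$ as a (possibly randomized) function of $(X_{1:t},\hat X_{1:t},A_{1:t-1})$. Estimate dynamics: if $A_t=1$ and $H_{t+1}=1$ then $\hat X_{t+1}=X_{t+1}$, otherwise $\hat X_{t+1}=\hat X_t$. Age: $\Delta_{t+1}=\Delta_t+1$ if $X_{t+1}\ne\hat X_{t+1}$ and $\Delta_{t+1}=0$ otherwise. The state $S_t=(X_t,\hat X_t,\Delta_t)$ lives in $\mathcal S=\{(0,0,0),(1,1,0)\}\cup\{(1,0,\delta),(0,1,\delta):\delta\ge1\}$,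 with $S_1=(0,0,0)$. Per-state cost $c(s)=\beta\delta$ if $s=(1,0,\delta)$, $c(s)=(1-\beta)\delta$ if $s=(0,1,\delta)$, and $c(s)=0$ for $s\in\{(0,0,0),(1,1,0)\}$, where $\beta\in[0,1]$. Per-stage cost $\ell(s,a)=\mathbb E[c(S_{t+1})\mid S_t=s,A_t=a]+\lambda\mathbb 1\{a=1\}$ with $\lambda\ge0$. Average cost of a policy $\pi$: $\mathcal L(\pi)=\limsup_{T\to\infty}\frac1T\sum_{t=1}^T\mathbb E^\pi[\ell(S_t,A_t)\mid S_1=(0,0,0)]$. The age-agnostic randomized policy $(f_0,f_1)$ transmits ($A_t=1$) at each slot independently with probability $f_i$ when $X_t=i$. *)

theory Defs
  imports "HOL-Probability.Probability"
begin

primrec kpow :: "('s \<Rightarrow> 's pmf) \<Rightarrow> nat \<Rightarrow> 's \<Rightarrow> 's pmf" where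
  "kpow K 0 i = return_pmf i"
| "kpow K (Suc n) i = bind_pmf (kpow K n i) K"

text \<open>Taboo expectation: taboo K z g n i = E_i[ g(X_n) ; X_1,...,X_n all different from z ].\<close>
primrec taboo :: "('s \<Rightarrow> 's pmf) \<Rightarrow> 's \<Rightarrow> ('s \<Rightarrow> ennreal) \<Rightarrow> nat \<Rightarrow> 's \<Rightarrow> ennreal" where
  "taboo K z g 0 i = g i"
| "taboo K z g (Suc n) i = (\<integral>\<^sup>+ s. (if s = z then 0 else taboo K z g n s) \<partial>measure_pmf (K i))"

text \<open>Expected first passage time from i to z: E_i[tau_z] with tau_z = min{n >= 1. X_n = z},
  computed as sum over n >= 0 of P_i(tau_z > n) (value infinity if tau_z = infinity with positive probability).\<close>
definition passage_time :: "('s \<Rightarrow> 's pmf) \<Rightarrow> 's \<Rightarrow> 's \<Rightarrow> ennreal" where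
  "passage_time K z i = (\<Sum>n. taboo K z (\<lambda>_. 1) n i)"

text \<open>Expected first passage cost: E_i[ sum_{t=0}^{tau_z - 1} g(X_t) ].\<close>
definition passage_cost :: "('s \<Rightarrow> 's pmf) \<Rightarrow> 's \<Rightarrow> ('s \<Rightarrow> ennreal) \<Rightarrow> 's \<Rightarrow> ennreal" where
  "passage_cost K z g i = (\<Sum>n. taboo K z g n i)"

definition closed_on :: "('s \<Rightarrow> 's pmf) \<Rightarrow> 's set \<Rightarrow> bool" where
  "closed_on K S \<longleftrightarrow> (\<forall>s\<in>S. set_pmf (K s) \<subseteq> S)"

definition irreducible_on :: "('s \<Rightarrow> 's pmf) \<Rightarrow> 's set \<Rightarrow> bool" where
  "irreducible_on K S \<longleftrightarrow> closed_on K S \<and> (\<forall>i\<in>S. \<forall>j\<in>S. \<exists>n. pmf (kpow K n i) j > 0)"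

definition aperiodic_on :: "('s \<Rightarrow> 's pmf) \<Rightarrow> 's set \<Rightarrow> bool" where
  "aperiodic_on K S \<longleftrightarrow> (\<forall>i\<in>S. Gcd {n. n > 0 \<and> pmf (kpow K n i) i > 0} = 1)"

definition positive_recurrent_on :: "('s \<Rightarrow> 's pmf) \<Rightarrow> 's set \<Rightarrow> bool" where
  "positive_recurrent_on K S \<longleftrightarrow> (\<forall>i\<in>S. passage_time K i i < \<infinity>)"

definition ergodic_on :: "('s \<Rightarrow> 's pmf) \<Rightarrow> 's set \<Rightarrow> bool" where
  "ergodic_on K S \<longleftrightarrow> irreducible_on K S \<and> aperiodic_on K S \<and> positive_recurrent_on K S"

definition stationary_on :: "('s \<Rightarrow> 's pmf) \<Rightarrow> 's set \<Rightarrow> 's pmf \<Rightarrow> bool" where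
  "stationary_on K S \<nu> \<longleftrightarrow> set_pmf \<nu> \<subseteq> S \<and> bind_pmf \<nu> K = \<nu>"

section \<open>The remote-estimation model (0 = normal, 1 = alarm)\<close>

definition src :: "real \<Rightarrow> real \<Rightarrow> nat \<Rightarrow> nat pmf" where
  "src p q x = (if x = 0 then map_pmf (\<lambda>b. if b then 1 else 0) (bernoulli_pmf p)
                else map_pmf (\<lambda>b. if b then 0 else 1) (bernoulli_pmf q))"

definition act :: "real \<Rightarrow> real \<Rightarrow> nat \<Rightarrow> bool pmf" where
  "act f0 f1 x = bernoulli_pmf (if x = 0 then f0 else f1)"

text \<open>One step of (X, Xhat) given action a: X_{t+1} from the source, H_{t+1} ~ Bernoulli(ps)
  independent; Xhat_{t+1} = X_{t+1} if a and H_{t+1}, else Xhat_t.\<close>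
definition est_step :: "real \<Rightarrow> real \<Rightarrow> real \<Rightarrow> nat \<times> nat \<Rightarrow> bool \<Rightarrow> (nat \<times> nat) pmf" where
  "est_step p q ps s a =
     bind_pmf (src p q (fst s)) (\<lambda>x'. bind_pmf (bernoulli_pmf ps) (\<lambda>h.
       return_pmf (x', if a \<and> h then x' else snd s)))"

definition sys_step :: "real \<Rightarrow> real \<Rightarrow> real \<Rightarrow> nat \<times> nat \<times> nat \<Rightarrow> bool \<Rightarrow> (nat \<times> nat \<times> nat) pmf" where
  "sys_step p q ps s a =
     map_pmf (\<lambda>(x', xh'). (x', xh', if x' \<noteq> xh' then snd (snd s) + 1 else 0))
       (est_step p q ps (fst s, fst (snd s)) a)"

definition K1 :: "real \<Rightarrow> real \<Rightarrow> real \<Rightarrow> real \<Rightarrow> real \<Rightarrow> nat \<times> nat \<Rightarrow> (nat \<times> nat) pmf" where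
  "K1 p q ps f0 f1 s = bind_pmf (act f0 f1 (fst s)) (est_step p q ps s)"

definition K2 :: "real \<Rightarrow> real \<Rightarrow> real \<Rightarrow> real \<Rightarrow> real \<Rightarrow> nat \<times> nat \<times> nat \<Rightarrow> (nat \<times> nat \<times> nat) pmf" where
  "K2 p q ps f0 f1 s = bind_pmf (act f0 f1 (fst s)) (sys_step p q ps s)"

definition S1 :: "(nat \<times> nat) set" where
  "S1 = {0, 1} \<times> {0, 1}"

definition S2 :: "(nat \<times> nat \<times> nat) set" where
  "S2 = {(0, 0, 0), (1, 1, 0)} \<union> {(1, 0, d) | d. d \<ge> 1} \<union> {(0, 1, d) | d. d \<ge> 1}"

definition cst :: "real \<Rightarrow> nat \<times> nat \<times> nat \<Rightarrow> real" where
  "cst \<beta> s = (if fst s = 1 \<and> fst (snd s) = 0 then \<beta> * real (snd (snd s))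
              else if fst s = 0 \<and> fst (snd s) = 1 then (1 - \<beta>) * real (snd (snd s)) else 0)"

definition stage_cost :: "real \<Rightarrow> real \<Rightarrow> real \<Rightarrow> real \<Rightarrow> real \<Rightarrow> nat \<times> nat \<times> nat \<Rightarrow> bool \<Rightarrow> real" where
  "stage_cost p q ps \<beta> lam s a =
     measure_pmf.expectation (sys_step p q ps s a) (cst \<beta>) + (if a then lam else 0)"

definition exp_stage_cost :: "real \<Rightarrow> real \<Rightarrow> real \<Rightarrow> real \<Rightarrow> real \<Rightarrow> real \<Rightarrow> real \<Rightarrow> nat \<times> nat \<times> nat \<Rightarrow> real" where
  "exp_stage_cost p q ps f0 f1 \<beta> lam s =
     measure_pmf.expectation (act f0 f1 (fst s)) (stage_cost p q ps \<beta> lam s)"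

text \<open>Average cost L(pi) = limsup_T (1/T) sum_{t=1}^T E[l(S_t,A_t)], with S_1 = (0,0,0);
  the law of S_t is the (t-1)-step law of MC2 from (0,0,0).\<close>
definition avg_cost :: "real \<Rightarrow> real \<Rightarrow> real \<Rightarrow> real \<Rightarrow> real \<Rightarrow> real \<Rightarrow> real \<Rightarrow> ereal" where
  "avg_cost p q ps f0 f1 \<beta> lam =
     limsup (\<lambda>T::nat. ereal ((1 / real T) * (\<Sum>t = 1..T.
        measure_pmf.expectation (kpow (K2 p q ps f0 f1) (t - 1) (0, 0, 0))
          (exp_stage_cost p q ps f0 f1 \<beta> lam))))"


section \<open>Closed-form stationary quantities (a0 = ps*f0, a1 = ps*f1 are f^0_alpha, f^1_alpha)\<close>

definition zeta :: "real \<Rightarrow> real \<Rightarrow> real \<Rightarrow> real \<Rightarrow> real" where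
  "zeta p q a0 a1 = (p + q) * (q * a0 + p * a1 + (1 - p - q) * a0 * a1)"

definition nu00 :: "real \<Rightarrow> real \<Rightarrow> real \<Rightarrow> real \<Rightarrow> real" where
  "nu00 p q a0 a1 = q * ((1 - p) * a0 + p * a1) * (q + (1 - q) * a1) / zeta p q a0 a1"

definition nu01 :: "real \<Rightarrow> real \<Rightarrow> real \<Rightarrow> real \<Rightarrow> real" where
  "nu01 p q a0 a1 = p * q * (1 - a1) * (q * a0 + (1 - q) * a1) / zeta p q a0 a1"

definition nu10 :: "real \<Rightarrow> real \<Rightarrow> real \<Rightarrow> real \<Rightarrow> real" where
  "nu10 p q a0 a1 = p * q * (1 - a0) * ((1 - p) * a0 + p * a1) / zeta p q a0 a1"

definition nu11 :: "real \<Rightarrow> real \<Rightarrow> real \<Rightarrow> real \<Rightarrow> real" where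
  "nu11 p q a0 a1 = p * (q * a0 + (1 - q) * a1) * (p + (1 - p) * a0) / zeta p q a0 a1"

end

theory Submission
  imports Defs
begin

text \<open>Every state of MC1 moves to (0, 0) with probability at least
  \<delta> = min ((1 - p) f^0_\<alpha>) (q f^1_\<alpha>) > 0. This Doeblin minorization gives ergodicity of MC1 and
  geometric convergence of its marginals to the stationary law. MC2 is MC1 together with the age,
  a deterministic function of the MC1 path, so (0, 0, 0) is again entered with probability at
  least \<delta> and every state of S2 is reached from every state within a bounded number of
  steps with uniformly positive probability; this yields irreducibility, positive recurrence and
  finite passage times. The stationary law of MC2 attaches to each off-diagonal state of MC1 a
  geometric age. The expected age cost obeys a contracting affine recurrence driven by the MC1
  marginals, so it converges and its Cesaro means give the average cost. The passage cost to
  (0, 0, 0) is dominated by the Lyapunov function A + B \<Delta>, since the stage cost grows at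
  most linearly in the age and the age increases by at most one per step.\<close>

section \<open>Iterated kernels\<close>

lemma kpow_Suc_left: "kpow K (Suc n) i = bind_pmf (K i) (kpow K n)"
proof (induction n arbitrary: i)
  case 0
  then show ?case by (simp add: bind_return_pmf bind_return_pmf')
next
  case (Suc n)
  have "kpow K (Suc (Suc n)) i = bind_pmf (kpow K (Suc n) i) K"
    by (simp only: kpow.simps)
  also have "\<dots> = bind_pmf (bind_pmf (K i) (kpow K n)) K"
    by (simp only: Suc)
  also have "\<dots> = bind_pmf (K i) (\<lambda>s. bind_pmf (kpow K n s) K)"
    by (rule bind_assoc_pmf)
  finally show ?case by (simp only: kpow.simps(2))
qed

lemma pmf_kpow_Suc_ge: "pmf (kpow K n i) s * pmf (K s) j \<le> pmf (kpow K (Suc n) i) j"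
proof -
  have "ennreal (pmf (kpow K n i) s * pmf (K s) j)
        = (\<integral>\<^sup>+ x. ennreal (pmf (K s) j) * indicator {s} x \<partial>measure_pmf (kpow K n i))"
    by (simp add: nn_integral_cmult_indicator emeasure_pmf_single ennreal_mult mult.commute)
  also have "\<dots> \<le> (\<integral>\<^sup>+ x. ennreal (pmf (K x) j) \<partial>measure_pmf (kpow K n i))"
    by (intro nn_integral_mono) (auto simp: indicator_def)
  also have "\<dots> = ennreal (pmf (kpow K (Suc n) i) j)"
    by (simp add: ennreal_pmf_bind)
  finally show ?thesis by (simp add: ennreal_le_iff)
qed

lemma finite_set_pmf_kpow:
  assumes "\<And>s. finite (set_pmf (K s))"
  shows "finite (set_pmf (kpow K n i))"
  by (induction n) (auto simp: assms)

lemma set_pmf_kpow_subset: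
  assumes "closed_on K S" "i \<in> S"
  shows "set_pmf (kpow K n i) \<subseteq> S"
  using assms by (induction n) (auto simp: closed_on_def)

lemma map_pmf_kpow_lumped:
  assumes "\<And>s. map_pmf f (K s) = L (f s)"
  shows "map_pmf f (kpow K n i) = kpow L n (f i)"
proof (induction n)
  case (Suc n)
  have "map_pmf f (kpow K (Suc n) i) = bind_pmf (kpow K n i) (\<lambda>s. L (f s))"
    by (simp add: map_bind_pmf assms)
  also have "\<dots> = bind_pmf (map_pmf f (kpow K n i)) L"
    by (simp add: bind_map_pmf)
  finally show ?case by (simp add: Suc)
qed simp

lemma pmf_bind_finite_support:
  assumes "finite S" "set_pmf M \<subseteq> S"
  shows "pmf (bind_pmf M K) y = (\<Sum>s\<in>S. pmf M s * pmf (K s) y)"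
  unfolding pmf_bind using assms
  by (subst integral_measure_pmf_real[where A = S]) (auto simp: mult.commute)

lemma pmf_bind_single_source:
  assumes "\<And>s. s \<in> set_pmf M \<Longrightarrow> s \<noteq> a \<Longrightarrow> pmf (K s) y = 0"
  shows "pmf (bind_pmf M K) y = pmf M a * pmf (K a) y"
  unfolding pmf_bind using assms
  by (subst integral_measure_pmf_real[where A = "{a}"]) (auto simp: mult.commute)

lemma pmf_map_unique_preimage:
  assumes "\<And>y. y \<in> set_pmf M \<Longrightarrow> f y = f x \<Longrightarrow> y = x"
  shows "pmf (map_pmf f M) (f x) = pmf M x"
proof -
  have "f -` {f x} \<inter> set_pmf M = {x} \<inter> set_pmf M"
    using assms by auto
  then have "measure M (f -` {f x}) = measure M {x}"
    by (metis measure_Int_set_pmf)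
  then show ?thesis
    by (simp add: pmf_map measure_pmf_single)
qed

lemma expectation_bind_pmf_finite:
  fixes f :: "'b \<Rightarrow> real"
  assumes "finite (set_pmf M)" "\<And>x. x \<in> set_pmf M \<Longrightarrow> finite (set_pmf (N x))"
  shows "measure_pmf.expectation (bind_pmf M N) f
         = measure_pmf.expectation M (\<lambda>x. measure_pmf.expectation (N x) f)"
  using assms
  by (simp add: pmf_expectation_bind[where A = "set_pmf M"]
      integral_measure_pmf_real[where A = "set_pmf M"]
      mult.commute)

section \<open>Passage times and passage costs\<close>

lemma taboo_add: "taboo K z g (m + n) i = taboo K z (taboo K z g n) m i"
proof (induction m arbitrary: i)
  case (Suc m)
  show ?case by simp (rule nn_integral_cong, simp add: Suc.IH)
qed simp

lemma taboo_mono: "(\<And>s. g s \<le> h s) \<Longrightarrow> taboo K z g n i \<le> taboo K z h n i"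
  by (induction n arbitrary: i) (auto intro!: nn_integral_mono)

lemma taboo_cmult: "taboo K z (\<lambda>s. c * g s) n i = c * taboo K z g n i"
proof (induction n arbitrary: i)
  case (Suc n)
  have "taboo K z (\<lambda>s. c * g s) (Suc n) i
        = (\<integral>\<^sup>+ s. c * (if s = z then 0 else taboo K z g n s) \<partial>measure_pmf (K i))"
    by (simp add: Suc if_distrib cong: if_cong)
  also have "\<dots> = c * taboo K z g (Suc n) i"
    by (subst nn_integral_cmult) auto
  finally show ?case .
qed simp

lemma taboo_le_kpow: "taboo K z g n i \<le> (\<integral>\<^sup>+ s. g s \<partial>measure_pmf (kpow K n i))"
proof (induction n arbitrary: i)
  case (Suc n)
  have "taboo K z g (Suc n) i \<le> (\<integral>\<^sup>+ s. (\<integral>\<^sup>+ y. g y \<partial>measure_pmf (kpow K n s)) \<partial>measure_pmf (K i))"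
    by (auto intro!: nn_integral_mono order.trans[OF _ Suc])
  also have "\<dots> = (\<integral>\<^sup>+ s. g s \<partial>measure_pmf (kpow K (Suc n) i))"
    by (simp only: kpow_Suc_left nn_integral_bind_pmf)
  finally show ?case .
qed simp

lemma taboo_one_le_one: "taboo K z (\<lambda>_. 1) n i \<le> 1"
  using taboo_le_kpow[of K z "\<lambda>_. 1" n i] by (simp add: measure_pmf.emeasure_space_1)

lemma taboo_one_Suc_le: "taboo K z (\<lambda>_. 1) (Suc m) i \<le> 1 - ennreal (pmf (kpow K (Suc m) i) z)"
proof -
  have "taboo K z (\<lambda>_. 1) (Suc m) i = taboo K z (taboo K z (\<lambda>_. 1) 1) m i"
    using taboo_add[of K z "\<lambda>_. 1" m 1 i] by simp
  also have "\<dots> \<le> (\<integral>\<^sup>+ x. taboo K z (\<lambda>_. 1) 1 x \<partial>measure_pmf (kpow K m i))"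
    by (rule taboo_le_kpow)
  also have "\<dots> = (\<integral>\<^sup>+ x. (\<integral>\<^sup>+ y. indicator (UNIV - {z}) y \<partial>measure_pmf (K x)) \<partial>measure_pmf (kpow K m i))"
    by (intro nn_integral_cong) (auto intro!: nn_integral_cong simp: indicator_def)
  also have "\<dots> = emeasure (measure_pmf (kpow K (Suc m) i)) (UNIV - {z})"
    by simp
  also have "\<dots> = 1 - ennreal (pmf (kpow K (Suc m) i) z)"
    by (subst emeasure_Diff) (auto simp: measure_pmf.emeasure_space_1 emeasure_pmf_single)
  finally show ?thesis .
qed

lemma taboo_one_geometric:
  assumes "\<And>i. taboo K z (\<lambda>_. 1) M i \<le> ennreal r" "0 \<le> r"
  shows "taboo K z (\<lambda>_. 1) (k * M) i \<le> ennreal (r ^ k)"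
proof (induction k arbitrary: i)
  case (Suc k)
  have "taboo K z (\<lambda>_. 1) (Suc k * M) i = taboo K z (taboo K z (\<lambda>_. 1) (k * M)) M i"
    using taboo_add[of K z "\<lambda>_. 1" M "k * M" i] by (simp add: add.commute)
  also have "\<dots> \<le> taboo K z (\<lambda>s. ennreal (r ^ k) * 1) M i"
    by (rule taboo_mono) (use Suc in simp)
  also have "\<dots> = ennreal (r ^ k) * taboo K z (\<lambda>_. 1) M i"
    by (rule taboo_cmult)
  also have "\<dots> \<le> ennreal (r ^ k) * ennreal r"
    by (intro mult_left_mono assms) auto
  also have "\<dots> = ennreal (r ^ Suc k)"
    using assms(2) by (simp add: ennreal_mult' mult.commute)
  finally show ?case .
qed simp

lemma summable_power_div:
  fixes r :: real
  assumes "0 < r" "r < 1" "0 < M"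
  shows "summable (\<lambda>n. r ^ (n div M))"
proof -
  define \<rho> where "\<rho> = root M r"
  have \<rho>: "0 < \<rho>" "\<rho> < 1" using assms by (auto simp: \<rho>_def)
  have \<rho>_power: "\<rho> ^ M = r" using assms by (simp add: \<rho>_def real_root_pow_pos2)
  have le: "r ^ (n div M) \<le> \<rho> ^ n / r" for n
  proof -
    have "n \<le> M * (n div M) + M"
      using assms(3)
      by (metis add_le_mono div_mult_mod_eq le_refl less_imp_le mod_less_divisor mult.commute)
    then have "\<rho> ^ (M * (n div M) + M) \<le> \<rho> ^ n"
      using \<rho> by (intro power_decreasing) auto
    then have "r ^ (n div M) * r \<le> \<rho> ^ n"
      by (simp add: power_add power_mult \<rho>_power[symmetric])
    then show ?thesis using assms by (simp add: field_simps)
  qed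
  show ?thesis
    by (rule summable_comparison_test[where g = "\<lambda>n. \<rho> ^ n / r"])
       (use le \<rho> assms in \<open>auto intro!: summable_divide summable_geometric\<close>)
qed

definition uniformly_reachable :: "('s \<Rightarrow> 's pmf) \<Rightarrow> 's \<Rightarrow> bool" where
  "uniformly_reachable K z \<longleftrightarrow> (\<exists>M \<epsilon>. 0 < \<epsilon> \<and> (\<forall>s. \<epsilon> \<le> pmf (kpow K (Suc M) s) z))"

lemma uniformly_reachableI:
  assumes "0 < \<epsilon>" "\<And>s. \<epsilon> \<le> pmf (K s) z"
  shows "uniformly_reachable K z"
  unfolding uniformly_reachable_def
  by (rule exI[of _ 0], rule exI[of _ \<epsilon>]) (simp add: assms bind_return_pmf)

lemma uniformly_reachable_step:
  assumes "uniformly_reachable K y" "0 < pmf (K y) z"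
  shows "uniformly_reachable K z"
proof -
  obtain M \<epsilon> where \<epsilon>: "0 < \<epsilon>" "\<And>s. \<epsilon> \<le> pmf (kpow K (Suc M) s) y"
    using assms(1) unfolding uniformly_reachable_def by blast
  have "\<epsilon> * pmf (K y) z \<le> pmf (kpow K (Suc (Suc M)) s) z" for s
    using \<epsilon>(2) by (intro order.trans[OF mult_right_mono pmf_kpow_Suc_ge]) auto
  moreover have "0 < \<epsilon> * pmf (K y) z"
    using \<epsilon>(1) assms(2) by simp
  ultimately show ?thesis
    unfolding uniformly_reachable_def by blast
qed

text \<open>Doeblin's argument: if z is hit within M + 1 steps with probability at least \<epsilon> from every
  state, the probability of avoiding it decays geometrically in blocks of M + 1 steps.\<close>
lemma passage_time_finite:
  assumes "uniformly_reachable K z"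
  shows "passage_time K z i < \<infinity>"
proof -
  obtain M \<epsilon> where \<epsilon>: "0 < \<epsilon>" "\<And>s. \<epsilon> \<le> pmf (kpow K (Suc M) s) z"
    using assms unfolding uniformly_reachable_def by blast
  define r where "r = max (1/2) (1 - \<epsilon>)"
  have r: "0 < r" "r < 1" using \<epsilon>(1) by (auto simp: r_def)
  have block: "taboo K z (\<lambda>_. 1) (Suc M) s \<le> ennreal r" for s
  proof -
    have "taboo K z (\<lambda>_. 1) (Suc M) s \<le> 1 - ennreal (pmf (kpow K (Suc M) s) z)"
      by (rule taboo_one_Suc_le)
    also have "\<dots> \<le> 1 - ennreal \<epsilon>"
      using \<epsilon> by (intro ennreal_minus_mono ennreal_leI) auto
    also have "\<dots> \<le> ennreal r"
      using \<epsilon>(1) by (auto simp: r_def ennreal_1[symmetric] ennreal_minus simp del: ennreal_1)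
    finally show ?thesis .
  qed
  have "taboo K z (\<lambda>_. 1) n i \<le> ennreal (r ^ (n div Suc M))" for n
  proof -
    have "taboo K z (\<lambda>_. 1) n i = taboo K z (\<lambda>_. 1) ((n div Suc M) * Suc M + n mod Suc M) i"
      by (simp only: div_mult_mod_eq)
    also have "\<dots> = taboo K z (taboo K z (\<lambda>_. 1) (n mod Suc M)) ((n div Suc M) * Suc M) i"
      by (rule taboo_add)
    also have "\<dots> \<le> taboo K z (\<lambda>_. 1) ((n div Suc M) * Suc M) i"
      by (intro taboo_mono taboo_one_le_one)
    also have "\<dots> \<le> ennreal (r ^ (n div Suc M))"
      by (rule taboo_one_geometric) (use block r in auto)
    finally show ?thesis .
  qed
  then have "passage_time K z i \<le> (\<Sum>n. ennreal (r ^ (n div Suc M)))"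
    unfolding passage_time_def by (intro suminf_le) auto
  also have "\<dots> = ennreal (\<Sum>n. r ^ (n div Suc M))"
    using summable_power_div[of r "Suc M"] r by (intro suminf_ennreal2) auto
  finally show ?thesis by (auto simp: top_unique less_top[symmetric])
qed

lemma irreducible_on_if_uniformly_reachable:
  assumes "closed_on K S" "\<And>z. z \<in> S \<Longrightarrow> uniformly_reachable K z"
  shows "irreducible_on K S"
  unfolding irreducible_on_def
proof (intro conjI assms(1) ballI)
  fix i j assume "j \<in> S"
  then obtain M \<epsilon> where "0 < \<epsilon>" "\<epsilon> \<le> pmf (kpow K (Suc M) i) j"
    using assms(2) unfolding uniformly_reachable_def by blast
  then show "\<exists>n. 0 < pmf (kpow K n i) j" by (meson less_le_trans)
qed

lemma positive_recurrent_on_if_uniformly_reachable: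
  "(\<And>z. z \<in> S \<Longrightarrow> uniformly_reachable K z) \<Longrightarrow> positive_recurrent_on K S"
  unfolding positive_recurrent_on_def by (blast intro: passage_time_finite)

lemma passage_cost_le_supersolution:
  assumes "\<And>s. g s + (\<integral>\<^sup>+ y. (if y = z then 0 else V y) \<partial>measure_pmf (K s)) \<le> V s"
  shows "passage_cost K z g i \<le> V i"
proof -
  have "(\<Sum>n<N. taboo K z g n s) \<le> V s" for N s
  proof (induction N arbitrary: s)
    case (Suc N)
    have "(\<Sum>n<Suc N. taboo K z g n s) = g s + (\<Sum>n<N. taboo K z g (Suc n) s)"
      by (subst sum.lessThan_Suc_shift) simp
    also have "(\<Sum>n<N. taboo K z g (Suc n) s)
               = (\<integral>\<^sup>+ y. (\<Sum>n<N. if y = z then 0 else taboo K z g n y) \<partial>measure_pmf (K s))"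
      by (simp add: nn_integral_sum)
    also have "\<dots> \<le> (\<integral>\<^sup>+ y. (if y = z then 0 else V y) \<partial>measure_pmf (K s))"
      by (intro nn_integral_mono) (auto simp: Suc)
    finally show ?case using assms[of s] by (meson add_left_mono order_trans)
  qed simp
  then show ?thesis
    unfolding passage_cost_def by (subst suminf_eq_SUP) (auto intro!: SUP_least)
qed

text \<open>If the cost grows at most linearly in a level h that increases by at most one per step,
  and z is entered in one step with probability at least \<delta>, then A + B h with B = b / \<delta> is a
  supersolution for a large enough constant A.\<close>
lemma passage_cost_finite:
  fixes g :: "'s \<Rightarrow> real" and h :: "'s \<Rightarrow> nat"
  assumes \<delta>: "0 < \<delta>" "\<And>s. \<delta> \<le> pmf (K s) z"
    and cost: "\<And>s. g s \<le> a + b * real (h s)" "0 \<le> a" "0 \<le> b"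
    and level: "\<And>s y. y \<in> set_pmf (K s) \<Longrightarrow> h y \<le> Suc (h s)"
  shows "passage_cost K z (\<lambda>s. ennreal (g s)) i < \<infinity>"
proof -
  define B where "B = b / \<delta>"
  define A where "A = (a + (1 - \<delta>) * B) / \<delta>"
  have "\<delta> \<le> 1" using \<delta>(2) pmf_le_1 order_trans by metis
  then have AB: "0 \<le> A" "0 \<le> B" using \<delta>(1) cost by (auto simp: A_def B_def)
  define V where "V s = ennreal (A + B * real (h s))" for s
  have "ennreal (g s) + (\<integral>\<^sup>+ y. (if y = z then 0 else V y) \<partial>measure_pmf (K s)) \<le> V s" for s
  proof -
    define c where "c = A + B * (real (h s) + 1)"
    have c: "0 \<le> c" using AB by (simp add: c_def)
    have "(\<integral>\<^sup>+ y. (if y = z then 0 else V y) \<partial>measure_pmf (K s))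
          \<le> (\<integral>\<^sup>+ y. ennreal c * indicator (UNIV - {z}) y \<partial>measure_pmf (K s))"
    proof (intro nn_integral_mono_AE AE_pmfI)
      fix y assume "y \<in> set_pmf (K s)"
      then have "A + B * real (h y) \<le> c"
        using level AB unfolding c_def by (intro add_left_mono mult_left_mono) force+
      then show "(if y = z then 0 else V y) \<le> ennreal c * indicator (UNIV - {z}) y"
        by (auto simp: V_def intro: ennreal_leI)
    qed
    also have "\<dots> = ennreal c * emeasure (measure_pmf (K s)) (UNIV - {z})"
      by (rule nn_integral_cmult_indicator) simp
    also have "emeasure (measure_pmf (K s)) (UNIV - {z}) = ennreal (1 - pmf (K s) z)"
      by (subst emeasure_Diff)
         (auto simp: measure_pmf.emeasure_space_1 emeasure_pmf_single ennreal_minus[symmetric])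
    also have "ennreal c * \<dots> \<le> ennreal (c * (1 - \<delta>))"
      using \<delta>(2)[of s] c by (simp add: ennreal_mult'[symmetric] ennreal_leI mult_left_mono)
    finally have "ennreal (g s) + (\<integral>\<^sup>+ y. (if y = z then 0 else V y) \<partial>measure_pmf (K s))
                  \<le> ennreal (a + b * real (h s)) + ennreal (c * (1 - \<delta>))"
      using cost(1)[of s] by (intro add_mono ennreal_leI)
    also have "\<dots> = ennreal (a + b * real (h s) + c * (1 - \<delta>))"
      using cost \<open>\<delta> \<le> 1\<close> c by (simp add: ennreal_plus)
    also have "a + b * real (h s) + c * (1 - \<delta>) = A + B * real (h s)"
      using \<delta>(1) unfolding c_def A_def B_def by (simp add: field_simps)
    finally show ?thesis by (simp add: V_def)
  qed
  then have "passage_cost K z (\<lambda>s. ennreal (g s)) i \<le> V i"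
    by (rule passage_cost_le_supersolution)
  also have "\<dots> < \<infinity>" by (simp add: V_def)
  finally show ?thesis .
qed

section \<open>Convergence to stationarity and of recurrences\<close>

lemma sum_abs_kernel_contraction:
  fixes k :: "'a \<Rightarrow> 'a \<Rightarrow> real" and e :: "'a \<Rightarrow> real"
  assumes S: "finite S" "y0 \<in> S"
    and kernel: "\<And>s y. s \<in> S \<Longrightarrow> y \<in> S \<Longrightarrow> 0 \<le> k s y" "\<And>s. s \<in> S \<Longrightarrow> (\<Sum>y\<in>S. k s y) = 1"
    and minor: "\<And>s. s \<in> S \<Longrightarrow> \<delta> \<le> k s y0"
    and balanced: "(\<Sum>s\<in>S. e s) = 0"
  shows "(\<Sum>y\<in>S. \<bar>\<Sum>s\<in>S. e s * k s y\<bar>) \<le> (1 - \<delta>) * (\<Sum>s\<in>S. \<bar>e s\<bar>)"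
proof -
  define c where "c y = (if y = y0 then \<delta> else 0)" for y
  have shift: "(\<Sum>s\<in>S. e s * k s y) = (\<Sum>s\<in>S. e s * (k s y - c y))" for y
    using balanced by (simp add: right_diff_distrib sum_subtractf sum_distrib_right[symmetric])
  have "(\<Sum>y\<in>S. \<bar>\<Sum>s\<in>S. e s * k s y\<bar>) \<le> (\<Sum>y\<in>S. \<Sum>s\<in>S. \<bar>e s\<bar> * (k s y - c y))"
    unfolding shift
  proof (intro sum_mono order.trans[OF sum_abs])
    fix y s assume "y \<in> S" "s \<in> S"
    then have "0 \<le> k s y - c y"
      using kernel(1) minor by (auto simp: c_def)
    then show "\<bar>e s * (k s y - c y)\<bar> \<le> \<bar>e s\<bar> * (k s y - c y)"
      by (simp add: abs_mult)
  qed
  also have "\<dots> = (\<Sum>s\<in>S. \<bar>e s\<bar> * (\<Sum>y\<in>S. k s y - c y))"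
    by (subst sum.swap) (simp add: sum_distrib_left)
  also have "\<dots> = (\<Sum>s\<in>S. \<bar>e s\<bar> * (1 - \<delta>))"
    using S by (intro sum.cong) (auto simp: sum_subtractf kernel(2) c_def)
  also have "\<dots> = (1 - \<delta>) * (\<Sum>s\<in>S. \<bar>e s\<bar>)"
    by (simp only: sum_distrib_right[symmetric] mult.commute)
  finally show ?thesis .
qed

text \<open>Doeblin contraction: removing the common mass \<delta> at y0 from every row leaves a
  nonnegative kernel of total mass 1 - \<delta>, which is all that acts on a signed measure of
  total mass zero.\<close>
lemma sum_abs_pmf_kpow_stationary_le:
  assumes S: "finite S" "closed_on K S" "i \<in> S" "y0 \<in> S"
    and minor: "\<And>s. s \<in> S \<Longrightarrow> \<delta> \<le> pmf (K s) y0"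
    and stationary: "stationary_on K S \<nu>"
  shows "(\<Sum>s\<in>S. \<bar>pmf (kpow K t i) s - pmf \<nu> s\<bar>) \<le> (1 - \<delta>) ^ t * (\<Sum>s\<in>S. \<bar>pmf (kpow K 0 i) s - pmf \<nu> s\<bar>)"
proof -
  have \<nu>: "set_pmf \<nu> \<subseteq> S" "bind_pmf \<nu> K = \<nu>"
    using stationary by (auto simp: stationary_on_def)
  have law: "set_pmf (kpow K t i) \<subseteq> S" for t
    by (rule set_pmf_kpow_subset[OF S(2,3)])
  have "\<delta> \<le> 1" using minor S(4) pmf_le_1 order_trans by metis
  define e where "e t = (\<Sum>s\<in>S. \<bar>pmf (kpow K t i) s - pmf \<nu> s\<bar>)" for t
  have contraction: "e (Suc t) \<le> (1 - \<delta>) * e t" for t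
  proof -
    have "pmf (kpow K (Suc t) i) y - pmf \<nu> y = (\<Sum>s\<in>S. (pmf (kpow K t i) s - pmf \<nu> s) * pmf (K s) y)" for y
      using pmf_bind_finite_support[OF S(1) \<nu>(1), of K y]
      by (simp add: \<nu>(2) pmf_bind_finite_support[OF S(1) law] sum_subtractf left_diff_distrib)
    then have "e (Suc t) = (\<Sum>y\<in>S. \<bar>\<Sum>s\<in>S. (pmf (kpow K t i) s - pmf \<nu> s) * pmf (K s) y\<bar>)"
      by (simp add: e_def)
    also have "\<dots> \<le> (1 - \<delta>) * e t"
      unfolding e_def
    proof (rule sum_abs_kernel_contraction[OF S(1,4)])
      show "(\<Sum>y\<in>S. pmf (K s) y) = 1" if "s \<in> S" for s
        using S(2) that by (intro sum_pmf_eq_1[OF S(1)]) (auto simp: closed_on_def)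
      show "(\<Sum>s\<in>S. pmf (kpow K t i) s - pmf \<nu> s) = 0"
        using sum_pmf_eq_1[OF S(1) law] sum_pmf_eq_1[OF S(1) \<nu>(1)] by (simp add: sum_subtractf)
    qed (use minor in auto)
    finally show ?thesis .
  qed
  show ?thesis
    unfolding e_def[symmetric]
  proof (induction t)
    case (Suc t)
    have "(1 - \<delta>) * e t \<le> (1 - \<delta>) * ((1 - \<delta>) ^ t * e 0)"
      using Suc \<open>\<delta> \<le> 1\<close> by (intro mult_left_mono) auto
    with contraction[of t] show ?case
      by (simp add: mult.assoc)
  qed simp
qed

lemma pmf_kpow_tendsto_stationary:
  assumes S: "finite S" "closed_on K S" "i \<in> S" "y0 \<in> S"
    and minor: "0 < \<delta>" "\<And>s. s \<in> S \<Longrightarrow> \<delta> \<le> pmf (K s) y0"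
    and stationary: "stationary_on K S \<nu>"
  shows "(\<lambda>t. pmf (kpow K t i) y) \<longlonglongrightarrow> pmf \<nu> y"
proof (cases "y \<in> S")
  case True
  define e0 where "e0 = (\<Sum>s\<in>S. \<bar>pmf (kpow K 0 i) s - pmf \<nu> s\<bar>)"
  have "\<delta> \<le> 1" using minor S(4) pmf_le_1 order_trans by metis
  have "\<bar>pmf (kpow K t i) y - pmf \<nu> y\<bar> \<le> (\<Sum>s\<in>S. \<bar>pmf (kpow K t i) s - pmf \<nu> s\<bar>)" for t
    by (rule member_le_sum[OF True]) (auto simp: S(1))
  then have "\<forall>\<^sub>F t in sequentially. norm (pmf (kpow K t i) y - pmf \<nu> y) \<le> (1 - \<delta>) ^ t * e0"
    using sum_abs_pmf_kpow_stationary_le[OF S minor(2) stationary]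
    by (intro always_eventually allI) (auto intro: order_trans simp: e0_def)
  moreover have "(\<lambda>t. (1 - \<delta>) ^ t * e0) \<longlonglongrightarrow> 0"
    using minor(1) \<open>\<delta> \<le> 1\<close> by (intro tendsto_mult_left_zero LIMSEQ_power_zero) auto
  ultimately have "(\<lambda>t. pmf (kpow K t i) y - pmf \<nu> y) \<longlonglongrightarrow> 0"
    by (rule Lim_null_comparison)
  then show ?thesis by (rule LIM_zero_cancel)
next
  case False
  then have "pmf (kpow K t i) y = 0" "pmf \<nu> y = 0" for t
    using set_pmf_kpow_subset[OF S(2,3)] stationary by (auto simp: pmf_eq_0_set_pmf stationary_on_def)
  then show ?thesis by simp
qed

lemma contracting_recurrence_tendsto_zero:
  fixes c e :: "nat \<Rightarrow> real"
  assumes rec: "\<And>t. c (Suc t) = \<rho> * c t + e t" and \<rho>: "0 \<le> \<rho>" "\<rho> < 1" and e: "e \<longlonglongrightarrow> 0"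
  shows "c \<longlonglongrightarrow> 0"
proof (rule LIMSEQ_I)
  fix \<epsilon> :: real assume \<epsilon>: "0 < \<epsilon>"
  obtain N where N: "\<And>t. t \<ge> N \<Longrightarrow> \<bar>e t\<bar> < \<epsilon> * (1 - \<rho>) / 2"
    using LIMSEQ_D[OF e, of "\<epsilon> * (1 - \<rho>) / 2"] \<epsilon> \<rho> by auto
  have bound: "\<bar>c (N + j)\<bar> \<le> \<rho> ^ j * \<bar>c N\<bar> + \<epsilon> / 2" for j
  proof (induction j)
    case (Suc j)
    have "\<bar>c (N + Suc j)\<bar> \<le> \<rho> * \<bar>c (N + j)\<bar> + \<bar>e (N + j)\<bar>"
      using \<rho> abs_triangle_ineq[of "\<rho> * c (N + j)" "e (N + j)"] by (simp add: rec abs_mult)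
    also have "\<dots> \<le> \<rho> * (\<rho> ^ j * \<bar>c N\<bar> + \<epsilon> / 2) + \<epsilon> * (1 - \<rho>) / 2"
      by (intro add_mono mult_left_mono Suc.IH) (use \<rho> N[of "N + j"] in auto)
    also have "\<dots> = \<rho> ^ Suc j * \<bar>c N\<bar> + \<epsilon> / 2"
      by (simp add: field_simps)
    finally show ?case .
  qed (use \<epsilon> in simp)
  have "(\<lambda>j. \<rho> ^ j * \<bar>c N\<bar>) \<longlonglongrightarrow> 0"
    using \<rho> by (intro tendsto_mult_left_zero LIMSEQ_power_zero) auto
  then obtain J where J: "\<And>j. j \<ge> J \<Longrightarrow> \<rho> ^ j * \<bar>c N\<bar> < \<epsilon> / 2"
    using LIMSEQ_D[of _ 0 "\<epsilon> / 2"] \<epsilon> \<rho> by fastforce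
  show "\<exists>no. \<forall>n\<ge>no. norm (c n - 0) < \<epsilon>"
  proof (intro exI allI impI)
    fix n assume "n \<ge> N + J"
    then have "J \<le> n - N" "N + (n - N) = n" by auto
    then show "norm (c n - 0) < \<epsilon>"
      using bound[of "n - N"] J[of "n - N"] by simp
  qed
qed

lemma affine_recurrence_tendsto:
  fixes m b :: "nat \<Rightarrow> real"
  assumes rec: "\<And>t. m (Suc t) = \<rho> * m t + b t" and \<rho>: "0 \<le> \<rho>" "\<rho> < 1" and b: "b \<longlonglongrightarrow> B"
  shows "m \<longlonglongrightarrow> B / (1 - \<rho>)"
proof -
  have "(\<lambda>t. m t - B / (1 - \<rho>)) \<longlonglongrightarrow> 0"
  proof (rule contracting_recurrence_tendsto_zero[OF _ \<rho>])
    show "m (Suc t) - B / (1 - \<rho>) = \<rho> * (m t - B / (1 - \<rho>)) + (b t - B)" for t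
      using \<rho> by (simp add: rec field_simps)
    show "(\<lambda>t. b t - B) \<longlonglongrightarrow> 0"
      using b by (rule LIM_zero)
  qed
  then show ?thesis by (rule LIM_zero_cancel)
qed

lemma cesaro_mean_tendsto:
  fixes a :: "nat \<Rightarrow> real"
  assumes "a \<longlonglongrightarrow> L"
  shows "(\<lambda>T. (1 / real T) * (\<Sum>t<T. a t)) \<longlonglongrightarrow> L"
proof (rule LIMSEQ_I)
  fix \<epsilon> :: real assume \<epsilon>: "0 < \<epsilon>"
  obtain N where N: "\<And>t. t \<ge> N \<Longrightarrow> \<bar>a t - L\<bar> < \<epsilon> / 2"
    using LIMSEQ_D[OF assms, of "\<epsilon> / 2"] \<epsilon> by auto
  define C where "C = (\<Sum>t<N. \<bar>a t - L\<bar>)"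
  obtain T0 :: nat where T0: "2 * C / \<epsilon> < T0" using reals_Archimedean2 by blast
  show "\<exists>no. \<forall>T\<ge>no. norm ((1 / real T) * (\<Sum>t<T. a t) - L) < \<epsilon>"
  proof (intro exI allI impI)
    fix T assume T: "max (Suc N) T0 \<le> T"
    have head: "\<bar>\<Sum>t<N. a t - L\<bar> \<le> C"
      unfolding C_def by (rule sum_abs)
    have "\<bar>\<Sum>t\<in>{N..<T}. a t - L\<bar> \<le> (\<Sum>t\<in>{N..<T}. \<epsilon> / 2)"
      using N by (intro order.trans[OF sum_abs] sum_mono) (auto intro: less_imp_le)
    also have "\<dots> \<le> real T * (\<epsilon> / 2)"
      using \<epsilon> by simp
    finally have tail: "\<bar>\<Sum>t\<in>{N..<T}. a t - L\<bar> \<le> real T * (\<epsilon> / 2)" .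
    have "2 * C / \<epsilon> < real T"
      using T T0 by linarith
    then have "C < real T * (\<epsilon> / 2)"
      using \<epsilon> by (simp add: field_simps)
    moreover have "(\<Sum>t<T. a t - L) = (\<Sum>t<N. a t - L) + (\<Sum>t\<in>{N..<T}. a t - L)"
      using sum.atLeastLessThan_concat[of 0 N T "\<lambda>t. a t - L"] T by (simp add: atLeast0LessThan)
    ultimately have "\<bar>\<Sum>t<T. a t - L\<bar> < real T * \<epsilon>"
      using head tail by linarith
    moreover have "(1 / real T) * (\<Sum>t<T. a t) - L = (1 / real T) * (\<Sum>t<T. a t - L)"
      using T by (simp add: sum_subtractf field_simps)
    ultimately show "norm ((1 / real T) * (\<Sum>t<T. a t) - L) < \<epsilon>"
      using T by (simp add: abs_mult field_simps)
  qed
qed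

section \<open>The chains MC1 and MC2 under the age-agnostic policy\<close>

definition w00 :: "real \<Rightarrow> real \<Rightarrow> real \<Rightarrow> real \<Rightarrow> real" where
  "w00 p q a0 a1 = q * ((1 - p) * a0 + p * a1) * (q + (1 - q) * a1)"
definition w01 :: "real \<Rightarrow> real \<Rightarrow> real \<Rightarrow> real \<Rightarrow> real" where
  "w01 p q a0 a1 = p * q * (1 - a1) * (q * a0 + (1 - q) * a1)"
definition w10 :: "real \<Rightarrow> real \<Rightarrow> real \<Rightarrow> real \<Rightarrow> real" where
  "w10 p q a0 a1 = p * q * (1 - a0) * ((1 - p) * a0 + p * a1)"
definition w11 :: "real \<Rightarrow> real \<Rightarrow> real \<Rightarrow> real \<Rightarrow> real" where
  "w11 p q a0 a1 = p * (q * a0 + (1 - q) * a1) * (p + (1 - p) * a0)"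

lemmas weight_defs = w00_def w01_def w10_def w11_def

lemma nu_eq_weight_div_zeta:
  "nu00 p q a0 a1 = w00 p q a0 a1 / zeta p q a0 a1" "nu01 p q a0 a1 = w01 p q a0 a1 / zeta p q a0 a1"
  "nu10 p q a0 a1 = w10 p q a0 a1 / zeta p q a0 a1" "nu11 p q a0 a1 = w11 p q a0 a1 / zeta p q a0 a1"
  by (simp_all add: nu00_def nu01_def nu10_def nu11_def weight_defs)

lemma weights_sum: "w00 p q a0 a1 + w01 p q a0 a1 + w10 p q a0 a1 + w11 p q a0 a1 = (zeta p q a0 a1 :: real)"
  unfolding weight_defs zeta_def by algebra

lemma weights_normal_sum: "(p + q) * (w00 p q a0 a1 + w01 p q a0 a1) = q * (zeta p q a0 a1 :: real)"
  unfolding weight_defs zeta_def by algebra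

lemma weights_alarm_sum: "(p + q) * (w10 p q a0 a1 + w11 p q a0 a1) = p * (zeta p q a0 a1 :: real)"
  unfolding weight_defs zeta_def by algebra

lemma weights_balance:
  fixes p q a0 a1 :: real
  shows "w00 p q a0 a1 = (1 - p) * w00 p q a0 a1 + (1 - p) * a0 * w01 p q a0 a1
                         + q * w10 p q a0 a1 + q * a1 * w11 p q a0 a1"
    and "w01 p q a0 a1 = (1 - p) * (1 - a0) * w01 p q a0 a1 + q * (1 - a1) * w11 p q a0 a1"
    and "w10 p q a0 a1 = p * (1 - a0) * w00 p q a0 a1 + (1 - q) * (1 - a1) * w10 p q a0 a1"
    and "w11 p q a0 a1 = p * a0 * w00 p q a0 a1 + p * w01 p q a0 a1
                         + (1 - q) * a1 * w10 p q a0 a1 + (1 - q) * w11 p q a0 a1"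
  unfolding weight_defs by algebra+

lemma weights_entrance:
  fixes p q a0 a1 :: real
  shows "w10 p q a0 a1 * (1 - (1 - q) * (1 - a1)) = p * (1 - a0) * w00 p q a0 a1"
    and "w01 p q a0 a1 * (1 - (1 - p) * (1 - a0)) = q * (1 - a1) * w11 p q a0 a1"
  unfolding weight_defs by algebra+

lemma weights_pos:
  fixes p q a0 a1 :: real
  assumes "0 < p" "p < 1" "0 < q" "q < 1" "0 < a0" "a0 < 1" "0 < a1" "a1 < 1"
  shows "0 < w00 p q a0 a1" "0 < w01 p q a0 a1" "0 < w10 p q a0 a1" "0 < w11 p q a0 a1"
    and "0 < zeta p q a0 a1"
proof -
  have "zeta p q a0 a1 = (p + q) * (q * a0 * (1 - a1) + p * a1 * (1 - a0) + a0 * a1)"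
    unfolding zeta_def by algebra
  then show "0 < zeta p q a0 a1"
    using assms by (simp add: add_pos_pos)
  show "0 < w00 p q a0 a1" "0 < w01 p q a0 a1" "0 < w10 p q a0 a1" "0 < w11 p q a0 a1"
    using assms unfolding weight_defs by (intro mult_pos_pos add_pos_pos; simp)+
qed

lemma sum4_divide:
  "(a::real) / z * c + b / z * d + e / z * f + g / z * h = (c * a + d * b + f * e + h * g) / z"
  by (simp add: add_divide_distrib mult.commute)

lemma S1_eq: "S1 = {(0, 0), (0, 1), (1, 0), (1, 1)}"
  by (auto simp: S1_def)

lemma sum_S1: "(\<Sum>s\<in>S1. f s) = f (0, 0) + f (0, 1) + f (1, 0) + f (1, 1)"
  by (simp add: S1_eq add.assoc)

lemma S2_cases:
  "s \<in> S2 \<longleftrightarrow> s = (0, 0, 0) \<or> s = (1, 1, 0) \<or> (\<exists>k. s = (1, 0, Suc k)) \<or> (\<exists>k. s = (0, 1, Suc k))"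
  unfolding S2_def by (auto simp: Suc_le_eq gr0_conv_Suc)

definition proj :: "nat \<times> nat \<times> nat \<Rightarrow> nat \<times> nat" where
  "proj s = (fst s, fst (snd s))"

definition age_update :: "nat \<Rightarrow> nat \<times> nat \<Rightarrow> nat \<times> nat \<times> nat" where
  "age_update d = (\<lambda>(y, yh). (y, yh, if y \<noteq> yh then d + 1 else 0))"

definition age_at :: "nat \<times> nat \<Rightarrow> nat \<times> nat \<times> nat \<Rightarrow> real" where
  "age_at v s = (if proj s = v then real (snd (snd s)) else 0)"

lemma cst_eq_age_at: "cst \<beta> s = \<beta> * age_at (1, 0) s + (1 - \<beta>) * age_at (0, 1) s"
  by (auto simp: cst_def age_at_def proj_def)

locale age_agnostic_policy =
  fixes p q ps f0 f1 :: real
  assumes p: "0 < p" "p < 1" and q: "0 < q" "q < 1" and ps: "0 < ps" "ps \<le> 1"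
    and f0: "0 < f0" "f0 \<le> 1" "ps * f0 < 1" and f1: "0 < f1" "f1 \<le> 1" "ps * f1 < 1"
begin

abbreviation "mc1 \<equiv> K1 p q ps f0 f1"
abbreviation "mc2 \<equiv> K2 p q ps f0 f1"
abbreviation "\<alpha>0 \<equiv> ps * f0"
abbreviation "\<alpha>1 \<equiv> ps * f1"

lemma \<alpha>_bounds: "0 < \<alpha>0" "\<alpha>0 < 1" "0 < \<alpha>1" "\<alpha>1 < 1"
  using ps f0 f1 by auto

definition transmit_prob :: "nat \<Rightarrow> real" where
  "transmit_prob x = (if x = 0 then f0 else f1)"

definition src_prob :: "nat \<Rightarrow> nat \<Rightarrow> real" where
  "src_prob x y = (if x = 0 then (if y = 1 then p else if y = 0 then 1 - p else 0)
                   else (if y = 0 then q else if y = 1 then 1 - q else 0))"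

text \<open>The two summands are the successful and the failed update; both contribute when the new source
  value equals the old estimate.\<close>
lemma pmf_mc1:
  "pmf (mc1 (x, xh)) (y, yh) = src_prob x y *
     ((if yh = y then ps * transmit_prob x else 0) + (if yh = xh then 1 - ps * transmit_prob x else 0))"
  using p q ps f0 f1 unfolding K1_def act_def est_step_def transmit_prob_def src_prob_def
  by (cases "x = 0") (auto simp: src_def bind_map_pmf pmf_bind indicator_def algebra_simps)

text \<open>The simplifier rewrites the numeral 1 :: nat to Suc 0 (One_nat_def), after which this table
  no longer matches; hence it is applied by simp only before any full simplification below.\<close>
lemma mc1_table:
  "pmf (mc1 (0,0)) (0,0) = 1 - p" "pmf (mc1 (0,1)) (0,0) = (1 - p) * \<alpha>0"
  "pmf (mc1 (1,0)) (0,0) = q" "pmf (mc1 (1,1)) (0,0) = q * \<alpha>1"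
  "pmf (mc1 (0,0)) (0,1) = 0" "pmf (mc1 (0,1)) (0,1) = (1 - p) * (1 - \<alpha>0)"
  "pmf (mc1 (1,0)) (0,1) = 0" "pmf (mc1 (1,1)) (0,1) = q * (1 - \<alpha>1)"
  "pmf (mc1 (0,0)) (1,0) = p * (1 - \<alpha>0)" "pmf (mc1 (0,1)) (1,0) = 0"
  "pmf (mc1 (1,0)) (1,0) = (1 - q) * (1 - \<alpha>1)" "pmf (mc1 (1,1)) (1,0) = 0"
  "pmf (mc1 (0,0)) (1,1) = p * \<alpha>0" "pmf (mc1 (0,1)) (1,1) = p"
  "pmf (mc1 (1,0)) (1,1) = (1 - q) * \<alpha>1" "pmf (mc1 (1,1)) (1,1) = 1 - q"
  by (simp_all add: pmf_mc1 src_prob_def transmit_prob_def)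

lemma set_pmf_mc1: "set_pmf (mc1 (x, xh)) \<subseteq> {0, 1} \<times> {0, 1, xh}"
proof
  fix s assume "s \<in> set_pmf (mc1 (x, xh))"
  then obtain y yh where "s = (y, yh)" "pmf (mc1 (x, xh)) (y, yh) \<noteq> 0"
    by (cases s) (auto simp: set_pmf_iff)
  then show "s \<in> {0, 1} \<times> {0, 1, xh}"
    by (auto simp: pmf_mc1 src_prob_def split: if_splits)
qed

lemma finite_set_pmf_mc1: "finite (set_pmf (mc1 s))"
  by (cases s) (auto intro: finite_subset[OF set_pmf_mc1])

lemma closed_S1: "closed_on mc1 S1"
  unfolding closed_on_def S1_def using set_pmf_mc1 by fastforce

lemma mc2_eq_map_mc1: "mc2 (x, xh, d) = map_pmf (age_update d) (mc1 (x, xh))"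
  unfolding K2_def K1_def sys_step_def age_update_def map_bind_pmf fst_conv snd_conv by (rule refl)

lemma pmf_mc2:
  "pmf (mc2 (x, xh, d)) (y, yh, e)
   = (if e = (if y \<noteq> yh then d + 1 else 0) then pmf (mc1 (x, xh)) (y, yh) else 0)"
proof (cases "e = (if y \<noteq> yh then d + 1 else 0)")
  case True
  moreover have "inj (age_update d)" by (auto simp: inj_def age_update_def)
  ultimately show ?thesis
    using pmf_map_inj'[of "age_update d" "mc1 (x, xh)" "(y, yh)"]
    by (simp add: mc2_eq_map_mc1 age_update_def)
next
  case False
  then have "(y, yh, e) \<notin> age_update d ` set_pmf (mc1 (x, xh))"
    by (auto simp: age_update_def)
  with False show ?thesis
    by (simp add: mc2_eq_map_mc1 pmf_map_outside)
qed

lemma finite_set_pmf_mc2: "finite (set_pmf (mc2 s))"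
  by (cases s) (simp add: mc2_eq_map_mc1 finite_set_pmf_mc1)

lemma map_proj_mc2: "map_pmf proj (mc2 s) = mc1 (proj s)"
proof (cases s)
  case (fields x xh d)
  have "proj \<circ> age_update d = id" by (auto simp: proj_def age_update_def)
  then have "map_pmf proj (map_pmf (age_update d) M) = M" for M
    by (simp add: pmf.map_comp pmf.map_id)
  then show ?thesis by (simp add: fields mc2_eq_map_mc1 proj_def)
qed

lemma closed_S2: "closed_on mc2 S2"
  unfolding closed_on_def
proof (intro ballI subsetI)
  fix s y assume s: "s \<in> S2" and y: "y \<in> set_pmf (mc2 s)"
  obtain x xh d where s_eq: "s = (x, xh, d)" by (cases s)
  then have "{0, 1, xh} = {0, 1::nat}" using s by (auto simp: S2_def)
  then have support: "set_pmf (mc1 (x, xh)) \<subseteq> {0, 1} \<times> {0, 1}"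
    using set_pmf_mc1[of x xh] by simp
  from y obtain u where "u \<in> set_pmf (mc1 (x, xh))" "y = age_update d u"
    by (auto simp: s_eq mc2_eq_map_mc1)
  with support show "y \<in> S2" by (auto simp: S2_def age_update_def)
qed

definition \<delta> :: real where
  "\<delta> = min ((1 - p) * \<alpha>0) (q * \<alpha>1)"

lemma \<delta>_pos: "0 < \<delta>"
  using p q \<alpha>_bounds by (simp add: \<delta>_def)

text \<open>Whatever the state, the next slot is (0, 0) if the source is normal and either the estimate
  already is normal or the update succeeds.\<close>
lemma mc1_minorization: "\<delta> \<le> pmf (mc1 s) (0, 0)"
proof (cases s)
  case (Pair x xh)
  have "(1 - p) * \<alpha>0 \<le> 1 - p" "q * \<alpha>1 \<le> q"
    using p q \<alpha>_bounds by (auto intro!: mult_left_le)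
  moreover have "\<delta> \<le> (1 - p) * \<alpha>0" "\<delta> \<le> q * \<alpha>1"
    by (simp_all add: \<delta>_def)
  ultimately show ?thesis
    by (simp add: Pair pmf_mc1 src_prob_def transmit_prob_def)
qed

lemma mc2_minorization: "\<delta> \<le> pmf (mc2 s) (0, 0, 0)"
  using mc1_minorization by (cases s) (simp add: pmf_mc2)

lemma uniformly_reachable_mc1: "z \<in> S1 \<Longrightarrow> uniformly_reachable mc1 z"
proof -
  have 00: "uniformly_reachable mc1 (0, 0)"
    using \<delta>_pos mc1_minorization by (rule uniformly_reachableI)
  have 11: "uniformly_reachable mc1 (1, 1)"
    using p \<alpha>_bounds by (intro uniformly_reachable_step[OF 00]) (simp only: mc1_table, simp)
  have 10: "uniformly_reachable mc1 (1, 0)"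
    using p \<alpha>_bounds by (intro uniformly_reachable_step[OF 00]) (simp only: mc1_table, simp)
  have 01: "uniformly_reachable mc1 (0, 1)"
    using q \<alpha>_bounds by (intro uniformly_reachable_step[OF 11]) (simp only: mc1_table, simp)
  show "z \<in> S1 \<Longrightarrow> uniformly_reachable mc1 z"
    using 00 01 10 11 unfolding S1_eq by blast
qed

lemma uniformly_reachable_mc2: "z \<in> S2 \<Longrightarrow> uniformly_reachable mc2 z"
proof -
  have 000: "uniformly_reachable mc2 (0, 0, 0)"
    using \<delta>_pos mc2_minorization by (rule uniformly_reachableI)
  have 110: "uniformly_reachable mc2 (1, 1, 0)"
    using p \<alpha>_bounds by (intro uniformly_reachable_step[OF 000]) (simp only: pmf_mc2 mc1_table, simp)
  have "uniformly_reachable mc2 (1, 0, Suc k)" for k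
  proof (induction k)
    case 0
    show ?case
      using p \<alpha>_bounds by (intro uniformly_reachable_step[OF 000]) (simp only: pmf_mc2 mc1_table, simp)
  next
    case (Suc k)
    show ?case
      using q \<alpha>_bounds by (intro uniformly_reachable_step[OF Suc]) (simp only: pmf_mc2 mc1_table, simp)
  qed
  moreover have "uniformly_reachable mc2 (0, 1, Suc k)" for k
  proof (induction k)
    case 0
    show ?case
      using q \<alpha>_bounds by (intro uniformly_reachable_step[OF 110]) (simp only: pmf_mc2 mc1_table, simp)
  next
    case (Suc k)
    show ?case
      using p \<alpha>_bounds by (intro uniformly_reachable_step[OF Suc]) (simp only: pmf_mc2 mc1_table, simp)
  qed
  ultimately show "z \<in> S2 \<Longrightarrow> uniformly_reachable mc2 z"
    using 000 110 unfolding S2_cases by blast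
qed

lemma aperiodic_mc1: "aperiodic_on mc1 S1"
  unfolding aperiodic_on_def
proof
  fix i assume "i \<in> S1"
  then have "0 < pmf (mc1 i) i"
    using p q \<alpha>_bounds unfolding S1_eq by (elim insertE emptyE) (simp_all only: mc1_table, simp_all)
  then have "1 \<in> {n. 0 < n \<and> 0 < pmf (kpow mc1 n i) i}"
    by (simp add: bind_return_pmf)
  then have "Gcd {n. 0 < n \<and> 0 < pmf (kpow mc1 n i) i} dvd 1"
    by (rule Gcd_dvd)
  then show "Gcd {n. 0 < n \<and> 0 < pmf (kpow mc1 n i) i} = 1"
    by simp
qed

lemma ergodic_mc1: "ergodic_on mc1 S1"
  unfolding ergodic_on_def
proof (intro conjI aperiodic_mc1)
  show "irreducible_on mc1 S1"
    using closed_S1 uniformly_reachable_mc1 by (rule irreducible_on_if_uniformly_reachable)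
  show "positive_recurrent_on mc1 S1"
    using uniformly_reachable_mc1 by (rule positive_recurrent_on_if_uniformly_reachable)
qed

abbreviation "\<nu>00 \<equiv> nu00 p q \<alpha>0 \<alpha>1"
abbreviation "\<nu>01 \<equiv> nu01 p q \<alpha>0 \<alpha>1"
abbreviation "\<nu>10 \<equiv> nu10 p q \<alpha>0 \<alpha>1"
abbreviation "\<nu>11 \<equiv> nu11 p q \<alpha>0 \<alpha>1"

lemma zeta_pos: "0 < zeta p q \<alpha>0 \<alpha>1"
  by (rule weights_pos(5)[OF p q \<alpha>_bounds])

lemma nu_pos: "0 < \<nu>00" "0 < \<nu>01" "0 < \<nu>10" "0 < \<nu>11"
  using weights_pos[OF p q \<alpha>_bounds] by (simp_all add: nu_eq_weight_div_zeta)

lemma nu_sum: "\<nu>00 + \<nu>01 + \<nu>10 + \<nu>11 = 1"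
  using weights_sum[of p q \<alpha>0 \<alpha>1] zeta_pos
  by (simp add: nu_eq_weight_div_zeta add_divide_distrib[symmetric])

definition \<nu>1_list :: "((nat \<times> nat) \<times> real) list" where
  "\<nu>1_list = [((0, 0), \<nu>00), ((0, 1), \<nu>01), ((1, 0), \<nu>10), ((1, 1), \<nu>11)]"

definition \<nu>1 :: "(nat \<times> nat) pmf" where
  "\<nu>1 = pmf_of_list \<nu>1_list"

lemma \<nu>1_list_wf: "pmf_of_list_wf \<nu>1_list"
  using nu_pos nu_sum by (auto simp: pmf_of_list_wf_def \<nu>1_list_def)

lemma pmf_\<nu>1: "pmf \<nu>1 (0, 0) = \<nu>00" "pmf \<nu>1 (0, 1) = \<nu>01" "pmf \<nu>1 (1, 0) = \<nu>10" "pmf \<nu>1 (1, 1) = \<nu>11"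
  by (simp_all only: \<nu>1_def pmf_pmf_of_list[OF \<nu>1_list_wf]) (simp_all add: \<nu>1_list_def)

lemma set_pmf_\<nu>1: "set_pmf \<nu>1 \<subseteq> S1"
  using set_pmf_of_list[OF \<nu>1_list_wf] by (auto simp: \<nu>1_def \<nu>1_list_def S1_def)

lemma stationary_\<nu>1: "stationary_on mc1 S1 \<nu>1"
  unfolding stationary_on_def
proof (intro conjI set_pmf_\<nu>1 pmf_eqI)
  fix y :: "nat \<times> nat"
  show "pmf (bind_pmf \<nu>1 mc1) y = pmf \<nu>1 y"
  proof (cases "y \<in> S1")
    case True
    have "finite S1" by (simp add: S1_eq)
    have "(\<Sum>s\<in>S1. pmf \<nu>1 s * pmf (mc1 s) y) = pmf \<nu>1 y"
      using True unfolding S1_eq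
      by (elim insertE emptyE)
         (simp_all only: sum_S1[unfolded S1_eq] pmf_\<nu>1 mc1_table nu_eq_weight_div_zeta sum4_divide
            mult_zero_left add_0_left add_0_right weights_balance[symmetric])
    then show ?thesis
      by (simp only: pmf_bind_finite_support[OF \<open>finite S1\<close> set_pmf_\<nu>1])
  next
    case False
    then have "y \<notin> set_pmf (bind_pmf \<nu>1 mc1)" "y \<notin> set_pmf \<nu>1"
      using set_pmf_\<nu>1 closed_S1 by (auto simp: closed_on_def)
    then show ?thesis by (metis pmf_eq_0_set_pmf)
  qed
qed

definition stay_prob :: "nat \<Rightarrow> real" where
  "stay_prob x = src_prob x x * (1 - ps * transmit_prob x)"

lemma stay_prob_simps: "stay_prob 0 = (1 - p) * (1 - \<alpha>0)" "stay_prob 1 = (1 - q) * (1 - \<alpha>1)"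
  by (simp_all add: stay_prob_def src_prob_def transmit_prob_def)

lemma stay_prob_bounds: "x \<in> {0, 1} \<Longrightarrow> 0 < stay_prob x \<and> stay_prob x < 1"
proof -
  have "(1 - p) * (1 - \<alpha>0) \<le> 1 - \<alpha>0" "(1 - q) * (1 - \<alpha>1) \<le> 1 - \<alpha>1"
    using p q \<alpha>_bounds by (simp_all add: mult_left_le_one_le)
  then have "(1 - p) * (1 - \<alpha>0) < 1" "(1 - q) * (1 - \<alpha>1) < 1"
    using \<alpha>_bounds by linarith+
  then have "0 < stay_prob 0 \<and> stay_prob 0 < 1" "0 < stay_prob 1 \<and> stay_prob 1 < 1"
    unfolding stay_prob_simps using p q \<alpha>_bounds by simp_all
  then show "x \<in> {0, 1} \<Longrightarrow> 0 < stay_prob x \<and> stay_prob x < 1"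
    by blast
qed

text \<open>In stationarity, the age of an off-diagonal state is geometric: it starts at 1 and grows
  as long as the state persists, which happens with probability stay_prob.\<close>
definition attach_age :: "nat \<times> nat \<Rightarrow> (nat \<times> nat \<times> nat) pmf" where
  "attach_age v = (if fst v = snd v then return_pmf (fst v, snd v, 0)
     else map_pmf (\<lambda>k. (fst v, snd v, Suc k)) (geometric_pmf (1 - stay_prob (fst v))))"

definition \<nu>2 :: "(nat \<times> nat \<times> nat) pmf" where
  "\<nu>2 = bind_pmf \<nu>1 attach_age"

lemma pmf_\<nu>2_eq: "pmf \<nu>2 (y, yh, e) = pmf \<nu>1 (y, yh) * pmf (attach_age (y, yh)) (y, yh, e)"
  unfolding \<nu>2_def
  by (rule pmf_bind_single_source) (auto simp: attach_age_def pmf_eq_0_set_pmf)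

lemma pmf_\<nu>2_diagonal: "pmf \<nu>2 (x, x, 0) = pmf \<nu>1 (x, x)"
  by (simp add: pmf_\<nu>2_eq attach_age_def)

lemma pmf_\<nu>2_off_diagonal:
  assumes "v \<in> S1" "fst v \<noteq> snd v"
  shows "pmf \<nu>2 (fst v, snd v, Suc k) = pmf \<nu>1 v * stay_prob (fst v) ^ k * (1 - stay_prob (fst v))"
proof -
  have "0 < 1 - stay_prob (fst v)" "1 - stay_prob (fst v) \<le> 1"
    using assms stay_prob_bounds[of "fst v"] by (auto simp: S1_def)
  moreover have "inj (\<lambda>k. (fst v, snd v, Suc k))" by (auto simp: inj_def)
  ultimately show ?thesis
    using assms pmf_map_inj'[of "\<lambda>k. (fst v, snd v, Suc k)" _ k]
    by (cases v) (simp add: pmf_\<nu>2_eq attach_age_def mult.assoc)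
qed

lemma set_pmf_\<nu>2: "set_pmf \<nu>2 \<subseteq> S2"
  using set_pmf_\<nu>1 by (auto simp: \<nu>2_def attach_age_def S1_def S2_def split: if_splits)

lemma map_proj_\<nu>2: "map_pmf proj \<nu>2 = \<nu>1"
proof -
  have "map_pmf proj (attach_age v) = return_pmf v" for v
    by (cases v) (auto simp: attach_age_def proj_def map_pmf_comp)
  then show ?thesis
    by (simp add: \<nu>2_def map_bind_pmf bind_return_pmf')
qed

lemma pmf_mc2_off_diagonal:
  "pmf (mc2 (x, xh, d)) (y, yh, Suc k)
   = (if y \<noteq> yh \<and> d = k \<and> xh = yh then src_prob x y * (1 - ps * transmit_prob x) else 0)"
  by (auto simp: pmf_mc2 pmf_mc1)

lemma nu_entrance:
  "\<nu>10 * (1 - stay_prob 1) = p * (1 - \<alpha>0) * \<nu>00"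
  "\<nu>01 * (1 - stay_prob 0) = q * (1 - \<alpha>1) * \<nu>11"
  using weights_entrance[of p q \<alpha>0 \<alpha>1]
  by (simp_all only: stay_prob_simps nu_eq_weight_div_zeta times_divide_eq_left times_divide_eq_right
      mult.assoc)

lemma pmf_\<nu>2_closed_form:
  "pmf \<nu>2 (0, 0, 0) = \<nu>00" "pmf \<nu>2 (1, 1, 0) = \<nu>11"
  "pmf \<nu>2 (1, 0, Suc k) = p * (1 - \<alpha>0) * ((1 - q) * (1 - \<alpha>1)) ^ k * \<nu>00"
  "pmf \<nu>2 (0, 1, Suc k) = q * (1 - \<alpha>1) * ((1 - p) * (1 - \<alpha>0)) ^ k * \<nu>11"
proof -
  show "pmf \<nu>2 (0, 0, 0) = \<nu>00" "pmf \<nu>2 (1, 1, 0) = \<nu>11"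
    by (simp_all only: pmf_\<nu>2_diagonal pmf_\<nu>1)
  have off_diagonal: "(1, 0) \<in> S1" "fst (1::nat, 0::nat) \<noteq> snd (1::nat, 0::nat)"
    "(0, 1) \<in> S1" "fst (0::nat, 1::nat) \<noteq> snd (0::nat, 1::nat)"
    by (simp_all add: S1_def)
  have "pmf \<nu>2 (1, 0, Suc k) = \<nu>10 * stay_prob 1 ^ k * (1 - stay_prob 1)"
    using pmf_\<nu>2_off_diagonal[OF off_diagonal(1,2), of k] by (simp only: fst_conv snd_conv pmf_\<nu>1)
  also have "\<dots> = \<nu>10 * (1 - stay_prob 1) * stay_prob 1 ^ k"
    by (simp only: ac_simps)
  also have "\<dots> = p * (1 - \<alpha>0) * \<nu>00 * ((1 - q) * (1 - \<alpha>1)) ^ k"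
    by (simp only: nu_entrance[unfolded stay_prob_simps] stay_prob_simps)
  finally show "pmf \<nu>2 (1, 0, Suc k) = p * (1 - \<alpha>0) * ((1 - q) * (1 - \<alpha>1)) ^ k * \<nu>00"
    by (simp only: ac_simps)
  have "pmf \<nu>2 (0, 1, Suc k) = \<nu>01 * stay_prob 0 ^ k * (1 - stay_prob 0)"
    using pmf_\<nu>2_off_diagonal[OF off_diagonal(3,4), of k] by (simp only: fst_conv snd_conv pmf_\<nu>1)
  also have "\<dots> = \<nu>01 * (1 - stay_prob 0) * stay_prob 0 ^ k"
    by (simp only: ac_simps)
  also have "\<dots> = q * (1 - \<alpha>1) * \<nu>11 * ((1 - p) * (1 - \<alpha>0)) ^ k"
    by (simp only: nu_entrance[unfolded stay_prob_simps] stay_prob_simps)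
  finally show "pmf \<nu>2 (0, 1, Suc k) = q * (1 - \<alpha>1) * ((1 - p) * (1 - \<alpha>0)) ^ k * \<nu>11"
    by (simp only: ac_simps)
qed

lemma pmf_\<nu>2_age:
  "1 \<le> k \<Longrightarrow> pmf \<nu>2 (1, 0, k) = p * (1 - \<alpha>0) * ((1 - q) * (1 - \<alpha>1)) ^ (k - 1) * \<nu>00"
  "1 \<le> k \<Longrightarrow> pmf \<nu>2 (0, 1, k) = q * (1 - \<alpha>1) * ((1 - p) * (1 - \<alpha>0)) ^ (k - 1) * \<nu>11"
  using pmf_\<nu>2_closed_form(3,4)[of "k - 1"] by (simp_all add: Suc_diff_le del: One_nat_def)

lemma \<nu>1_entrance:
  assumes "v \<in> S1" "fst v \<noteq> snd v"
  shows "pmf \<nu>1 (snd v, snd v) * pmf (mc1 (snd v, snd v)) v = pmf \<nu>1 v * (1 - stay_prob (fst v))"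
proof -
  have "v = (1, 0) \<or> v = (0, 1)"
    using assms by (auto simp: S1_eq)
  then show ?thesis
    by (elim disjE)
       (simp_all only: fst_conv snd_conv pmf_\<nu>1 mc1_table nu_entrance, simp_all only: mult.commute)
qed

lemma pmf_bind_\<nu>2_mc2_diagonal: "pmf (bind_pmf \<nu>2 mc2) (x, x, 0) = pmf \<nu>2 (x, x, 0)"
proof -
  have support: "set_pmf (bind_pmf \<nu>2 mc2) \<subseteq> S2"
    using set_pmf_\<nu>2 closed_S2 by (fastforce simp: closed_on_def)
  have "pmf (bind_pmf \<nu>2 mc2) (x, x, 0) = pmf (map_pmf proj (bind_pmf \<nu>2 mc2)) (proj (x, x, 0))"
    using support by (intro pmf_map_unique_preimage[symmetric]) (auto simp: proj_def S2_cases)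
  also have "map_pmf proj (bind_pmf \<nu>2 mc2) = bind_pmf (map_pmf proj \<nu>2) mc1"
    by (simp add: map_bind_pmf map_proj_mc2 bind_map_pmf)
  also have "\<dots> = \<nu>1"
    using stationary_\<nu>1 by (simp add: map_proj_\<nu>2 stationary_on_def)
  finally show ?thesis
    by (simp add: proj_def pmf_\<nu>2_diagonal)
qed

text \<open>An off-diagonal state with age k + 1 is entered only from the diagonal state (k = 0) or
  from the same state with age k.\<close>
lemma pmf_bind_\<nu>2_mc2_off_diagonal:
  assumes v: "v \<in> S1" "fst v \<noteq> snd v"
  shows "pmf (bind_pmf \<nu>2 mc2) (fst v, snd v, Suc k) = pmf \<nu>2 (fst v, snd v, Suc k)"
proof -
  obtain x xh where v_eq: "v = (x, xh)" and x: "x \<in> {0, 1}" "xh \<in> {0, 1}" "x \<noteq> xh"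
    using v by (cases v) (auto simp: S1_def)
  define pred where "pred = (if k = 0 then (xh, xh, 0) else (x, xh, k))"
  have "pmf (mc2 s) (x, xh, Suc k) = 0" if "s \<in> set_pmf \<nu>2" "s \<noteq> pred" for s
  proof -
    obtain a b d where s: "s = (a, b, d)" by (cases s)
    have "s \<in> S2" using that set_pmf_\<nu>2 by auto
    then have "\<not> (d = k \<and> b = xh)"
      using that(2) x unfolding s S2_def pred_def by auto
    then show ?thesis
      by (auto simp: s pmf_mc2_off_diagonal)
  qed
  then have "pmf (bind_pmf \<nu>2 mc2) (x, xh, Suc k) = pmf \<nu>2 pred * pmf (mc2 pred) (x, xh, Suc k)"
    by (rule pmf_bind_single_source)
  also have "\<dots> = pmf \<nu>2 (x, xh, Suc k)"
  proof (cases k)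
    case 0
    have "pmf (mc2 pred) (x, xh, Suc k) = pmf (mc1 (xh, xh)) v"
      using x 0 by (simp add: pred_def pmf_mc2 v_eq)
    then show ?thesis
      using \<nu>1_entrance[OF v] pmf_\<nu>2_off_diagonal[OF v, of 0] 0
      by (simp add: pred_def pmf_\<nu>2_diagonal v_eq)
  next
    case (Suc j)
    have "pmf (mc2 pred) (x, xh, Suc k) = stay_prob x"
      using x Suc by (simp add: pred_def pmf_mc2_off_diagonal stay_prob_def)
    then show ?thesis
      using pmf_\<nu>2_off_diagonal[OF v, of j] pmf_\<nu>2_off_diagonal[OF v, of k] Suc
      by (simp add: pred_def v_eq)
  qed
  finally show ?thesis by (simp add: v_eq)
qed

lemma stationary_\<nu>2: "stationary_on mc2 S2 \<nu>2"
  unfolding stationary_on_def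
proof (intro conjI set_pmf_\<nu>2 pmf_eqI)
  fix y :: "nat \<times> nat \<times> nat"
  show "pmf (bind_pmf \<nu>2 mc2) y = pmf \<nu>2 y"
  proof (cases "y \<in> S2")
    case True
    then consider x where "y = (x, x, 0)"
      | v k where "v \<in> S1" "fst v \<noteq> snd v" "y = (fst v, snd v, Suc k)"
      unfolding S2_cases S1_def by force
    then show ?thesis
      by cases (simp_all add: pmf_bind_\<nu>2_mc2_diagonal pmf_bind_\<nu>2_mc2_off_diagonal)
  next
    case False
    then have "y \<notin> set_pmf (bind_pmf \<nu>2 mc2)" "y \<notin> set_pmf \<nu>2"
      using set_pmf_\<nu>2 closed_S2 by (auto simp: closed_on_def)
    then show ?thesis by (metis pmf_eq_0_set_pmf)
  qed
qed

abbreviation "law1 t \<equiv> kpow mc1 t (0, 0)"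
abbreviation "law2 t \<equiv> kpow mc2 t (0, 0, 0)"

lemma finite_set_pmf_law2: "finite (set_pmf (law2 t))"
  by (rule finite_set_pmf_kpow[OF finite_set_pmf_mc2])

lemma set_pmf_law1: "set_pmf (law1 t) \<subseteq> S1"
  by (rule set_pmf_kpow_subset[OF closed_S1]) (simp add: S1_def)

lemma set_pmf_law2: "set_pmf (law2 t) \<subseteq> S2"
  by (rule set_pmf_kpow_subset[OF closed_S2]) (simp add: S2_def)

lemma map_proj_law2: "map_pmf proj (law2 t) = law1 t"
  using map_pmf_kpow_lumped[of proj mc2 mc1, OF map_proj_mc2] by (simp add: proj_def)

lemma pmf_law1_tendsto: "(\<lambda>t. pmf (law1 t) v) \<longlonglongrightarrow> pmf \<nu>1 v"
proof -
  have "finite S1" "(0, 0) \<in> S1" by (simp_all add: S1_def)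
  then show ?thesis
    by (intro pmf_kpow_tendsto_stationary[OF _ closed_S1 _ _ \<delta>_pos mc1_minorization stationary_\<nu>1])
qed

lemma expectation_law1_tendsto:
  fixes g :: "nat \<times> nat \<Rightarrow> real"
  shows "(\<lambda>t. measure_pmf.expectation (law1 t) g) \<longlonglongrightarrow> measure_pmf.expectation \<nu>1 g"
proof -
  have "finite S1" by (simp add: S1_eq)
  have "(\<lambda>t. \<Sum>v\<in>S1. g v * pmf (law1 t) v) \<longlonglongrightarrow> (\<Sum>v\<in>S1. g v * pmf \<nu>1 v)"
    by (intro tendsto_sum tendsto_mult tendsto_const pmf_law1_tendsto)
  then show ?thesis
    using set_pmf_law1 set_pmf_\<nu>1
    by (subst (1 2) integral_measure_pmf_real[OF \<open>finite S1\<close>]) auto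
qed

lemma expectation_mc2_age_at:
  assumes "fst v \<noteq> snd v"
  shows "measure_pmf.expectation (mc2 (x, xh, d)) (age_at v) = real (Suc d) * pmf (mc1 (x, xh)) v"
proof -
  have "age_at v (age_update d u) = (if u = v then real (Suc d) else 0)" for u
    using assms by (cases u) (auto simp: age_at_def age_update_def proj_def)
  then have "measure_pmf.expectation (mc2 (x, xh, d)) (age_at v)
             = measure_pmf.expectation (mc1 (x, xh)) (\<lambda>u. if u = v then real (Suc d) else 0)"
    by (simp add: mc2_eq_map_mc1)
  also have "\<dots> = real (Suc d) * pmf (mc1 (x, xh)) v"
    by (subst integral_measure_pmf_real[where A = "{v}"]) (auto split: if_splits)
  finally show ?thesis .
qed

lemma pmf_mc1_stay: "v \<in> S1 \<Longrightarrow> fst v \<noteq> snd v \<Longrightarrow> pmf (mc1 v) v = stay_prob (fst v)"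
  by (auto simp: S1_def pmf_mc1 stay_prob_def)

text \<open>The age at v grows by one exactly when the chain stays at v, and is 1 on entering v; within
  S2 the only other state leading to v is diagonal, where the age vanishes.\<close>
lemma expectation_mc2_age_at_S2:
  assumes "s \<in> S2" "v \<in> S1" "fst v \<noteq> snd v"
  shows "measure_pmf.expectation (mc2 s) (age_at v)
         = pmf (mc1 (proj s)) v + stay_prob (fst v) * age_at v s"
proof -
  obtain x xh d where s: "s = (x, xh, d)" by (cases s)
  have "real (Suc d) * pmf (mc1 (x, xh)) v = pmf (mc1 (x, xh)) v + stay_prob (fst v) * age_at v s"
  proof (cases "(x, xh) = v")
    case True
    then show ?thesis
      using pmf_mc1_stay[OF assms(2,3)] by (simp add: s age_at_def proj_def algebra_simps)
  next
    case False
    then have "d = 0 \<or> pmf (mc1 (x, xh)) v = 0"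
      using assms by (auto simp: s S2_def S1_def pmf_mc1 src_prob_def)
    then show ?thesis
      using False by (auto simp: s age_at_def proj_def)
  qed
  then show ?thesis
    using assms(3) by (simp add: s expectation_mc2_age_at proj_def)
qed

definition mean_age :: "nat \<times> nat \<Rightarrow> nat \<Rightarrow> real" where
  "mean_age v t = measure_pmf.expectation (law2 t) (age_at v)"

lemma expectation_law2_mc2:
  "measure_pmf.expectation (law2 (Suc t)) f
   = measure_pmf.expectation (law2 t) (\<lambda>s. measure_pmf.expectation (mc2 s) (f :: _ \<Rightarrow> real))"
  by (simp only: kpow.simps)
     (rule expectation_bind_pmf_finite[OF finite_set_pmf_law2 finite_set_pmf_mc2])

lemma mean_age_Suc:
  assumes "v \<in> S1" "fst v \<noteq> snd v"
  shows "mean_age v (Suc t) = stay_prob (fst v) * mean_age v t + pmf (law1 (Suc t)) v"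
proof -
  have integrable: "integrable (measure_pmf (law2 t)) (f :: _ \<Rightarrow> real)" for f
    by (rule integrable_measure_pmf_finite[OF finite_set_pmf_law2])
  have "mean_age v (Suc t) = measure_pmf.expectation (law2 t)
          (\<lambda>s. pmf (mc1 (proj s)) v + stay_prob (fst v) * age_at v s)"
    unfolding mean_age_def expectation_law2_mc2
    using set_pmf_law2[of t] expectation_mc2_age_at_S2[OF _ assms]
    by (intro integral_cong_AE) (auto simp: AE_measure_pmf_iff)
  also have "\<dots> = measure_pmf.expectation (law1 t) (\<lambda>u. pmf (mc1 u) v) + stay_prob (fst v) * mean_age v t"
    by (simp add: integrable mean_age_def flip: map_proj_law2)
  also have "measure_pmf.expectation (law1 t) (\<lambda>u. pmf (mc1 u) v) = pmf (law1 (Suc t)) v"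
    by (simp add: pmf_bind)
  finally show ?thesis by simp
qed

lemma mean_age_tendsto:
  assumes "v \<in> S1" "fst v \<noteq> snd v"
  shows "mean_age v \<longlonglongrightarrow> pmf \<nu>1 v / (1 - stay_prob (fst v))"
proof (rule affine_recurrence_tendsto)
  show "mean_age v (Suc t) = stay_prob (fst v) * mean_age v t + pmf (law1 (Suc t)) v" for t
    using assms by (rule mean_age_Suc)
  show "0 \<le> stay_prob (fst v)" "stay_prob (fst v) < 1"
    using assms stay_prob_bounds[of "fst v"] by (auto simp: S1_def)
  show "(\<lambda>t. pmf (law1 (Suc t)) v) \<longlonglongrightarrow> pmf \<nu>1 v"
    by (rule LIMSEQ_Suc[OF pmf_law1_tendsto])
qed

lemma exp_stage_cost_eq:
  "exp_stage_cost p q ps f0 f1 \<beta> lam s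
   = measure_pmf.expectation (mc2 s) (cst \<beta>) + lam * transmit_prob (fst s)"
proof -
  define f where "f = transmit_prob (fst s)"
  have f: "0 \<le> f" "f \<le> 1" using f0 f1 by (auto simp: f_def transmit_prob_def)
  have act: "act f0 f1 (fst s) = bernoulli_pmf f"
    by (simp add: act_def f_def transmit_prob_def)
  have "finite (set_pmf (sys_step p q ps s a))" for a
    by (simp add: sys_step_def est_step_def src_def)
  then have "measure_pmf.expectation (mc2 s) (cst \<beta>)
      = measure_pmf.expectation (act f0 f1 (fst s))
          (\<lambda>a. measure_pmf.expectation (sys_step p q ps s a) (cst \<beta>))"
    unfolding K2_def by (intro expectation_bind_pmf_finite) (simp_all add: act)
  then show ?thesis
    using f by (simp add: exp_stage_cost_def stage_cost_def act f_def algebra_simps)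
qed

lemma expectation_mc2_cst:
  "measure_pmf.expectation (mc2 s) (cst \<beta>)
   = \<beta> * measure_pmf.expectation (mc2 s) (age_at (1, 0))
     + (1 - \<beta>) * measure_pmf.expectation (mc2 s) (age_at (0, 1))"
  unfolding cst_eq_age_at by (simp add: integrable_measure_pmf_finite[OF finite_set_pmf_mc2])

lemma exp_stage_cost_le:
  assumes "0 \<le> \<beta>" "\<beta> \<le> 1" "0 \<le> lam"
  shows "exp_stage_cost p q ps f0 f1 \<beta> lam (x, xh, d) \<le> 1 + lam + real d"
proof -
  define P10 where "P10 = pmf (mc1 (x, xh)) (1, 0)"
  define P01 where "P01 = pmf (mc1 (x, xh)) (0, 1)"
  have "P10 + P01 = measure (mc1 (x, xh)) {(1, 0), (0, 1)}"
    by (simp add: P10_def P01_def measure_measure_pmf_finite)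
  then have P: "0 \<le> P10" "0 \<le> P01" "P10 + P01 \<le> 1"
    by (auto simp: P10_def P01_def)
  have "\<beta> * P10 + (1 - \<beta>) * P01 \<le> 1"
    using assms P mult_left_le_one_le[of P10 \<beta>] mult_left_le_one_le[of P01 "1 - \<beta>"] by linarith
  then have "real (Suc d) * (\<beta> * P10 + (1 - \<beta>) * P01) \<le> real (Suc d)"
    by (simp add: mult_left_le)
  moreover have "lam * transmit_prob x \<le> lam"
    using assms f0 f1 by (simp add: mult_left_le transmit_prob_def)
  ultimately show ?thesis
    by (simp add: exp_stage_cost_eq expectation_mc2_cst expectation_mc2_age_at P10_def P01_def
        algebra_simps)
qed

lemma expectation_law2_stage_cost:
  "measure_pmf.expectation (law2 t) (exp_stage_cost p q ps f0 f1 \<beta> lam)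
   = \<beta> * mean_age (1, 0) (Suc t) + (1 - \<beta>) * mean_age (0, 1) (Suc t)
     + lam * measure_pmf.expectation (law1 t) (\<lambda>v. transmit_prob (fst v))"
proof -
  have integrable: "integrable (measure_pmf (law2 t)) (f :: _ \<Rightarrow> real)" for f
    by (rule integrable_measure_pmf_finite[OF finite_set_pmf_law2])
  have "mean_age v (Suc t)
        = measure_pmf.expectation (law2 t) (\<lambda>s. measure_pmf.expectation (mc2 s) (age_at v))" for v
    by (simp only: mean_age_def expectation_law2_mc2)
  moreover have "measure_pmf.expectation (law2 t) (\<lambda>s. transmit_prob (fst s))
        = measure_pmf.expectation (law1 t) (\<lambda>v. transmit_prob (fst v))"
    by (simp add: proj_def flip: map_proj_law2)
  moreover have "exp_stage_cost p q ps f0 f1 \<beta> lam = (\<lambda>s.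
      \<beta> * measure_pmf.expectation (mc2 s) (age_at (1, 0))
      + (1 - \<beta>) * measure_pmf.expectation (mc2 s) (age_at (0, 1))
      + lam * transmit_prob (fst s))"
    by (simp add: fun_eq_iff exp_stage_cost_eq expectation_mc2_cst)
  ultimately show ?thesis
    by (simp add: integrable del: One_nat_def)
qed

lemma mean_age_limits:
  "pmf \<nu>1 (1, 0) / (1 - stay_prob 1) = p * (1 - \<alpha>0) * \<nu>00 / (1 - (1 - q) * (1 - \<alpha>1))\<^sup>2"
  "pmf \<nu>1 (0, 1) / (1 - stay_prob 0) = q * (1 - \<alpha>1) * \<nu>11 / (1 - (1 - p) * (1 - \<alpha>0))\<^sup>2"
proof -
  have "1 - stay_prob 1 \<noteq> 0" "1 - stay_prob 0 \<noteq> 0"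
    using stay_prob_bounds[of 0] stay_prob_bounds[of 1] by auto
  then have "pmf \<nu>1 (1, 0) / (1 - stay_prob 1) = \<nu>10 * (1 - stay_prob 1) / (1 - stay_prob 1)\<^sup>2"
    "pmf \<nu>1 (0, 1) / (1 - stay_prob 0) = \<nu>01 * (1 - stay_prob 0) / (1 - stay_prob 0)\<^sup>2"
    by (simp_all add: pmf_\<nu>1 power2_eq_square del: One_nat_def)
  then show "pmf \<nu>1 (1, 0) / (1 - stay_prob 1) = p * (1 - \<alpha>0) * \<nu>00 / (1 - (1 - q) * (1 - \<alpha>1))\<^sup>2"
    "pmf \<nu>1 (0, 1) / (1 - stay_prob 0) = q * (1 - \<alpha>1) * \<nu>11 / (1 - (1 - p) * (1 - \<alpha>0))\<^sup>2"
    by (simp_all only: nu_entrance[unfolded stay_prob_simps] stay_prob_simps)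
qed

lemma expectation_\<nu>1_transmit_prob:
  "measure_pmf.expectation \<nu>1 (\<lambda>v. transmit_prob (fst v)) = (q * f0 + p * f1) / (p + q)"
proof -
  have "finite S1" by (simp add: S1_eq)
  have "0 < p + q" using p q by simp
  have "\<nu>00 + \<nu>01 = q / (p + q)" "\<nu>10 + \<nu>11 = p / (p + q)"
    using weights_normal_sum[of p q \<alpha>0 \<alpha>1] weights_alarm_sum[of p q \<alpha>0 \<alpha>1] zeta_pos \<open>0 < p + q\<close>
    by (simp_all add: nu_eq_weight_div_zeta field_simps)
  moreover have "measure_pmf.expectation \<nu>1 (\<lambda>v. transmit_prob (fst v))
                 = f0 * (\<nu>00 + \<nu>01) + f1 * (\<nu>10 + \<nu>11)"
    using set_pmf_\<nu>1
    by (subst integral_measure_pmf_real[OF \<open>finite S1\<close>])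
       (auto simp: sum_S1 pmf_\<nu>1 transmit_prob_def algebra_simps simp del: One_nat_def)
  ultimately show ?thesis
    by (simp add: add_divide_distrib mult.commute)
qed

lemma avg_cost_eq:
  "avg_cost p q ps f0 f1 \<beta> lam =
     ereal (\<beta> * p * (1 - \<alpha>0) * \<nu>00 / (1 - (1 - q) * (1 - \<alpha>1))\<^sup>2
          + (1 - \<beta>) * q * (1 - \<alpha>1) * \<nu>11 / (1 - (1 - p) * (1 - \<alpha>0))\<^sup>2
          + lam * (q * f0 + p * f1) / (p + q))"
    (is "_ = ereal ?L")
proof -
  define a where "a t = measure_pmf.expectation (law2 t) (exp_stage_cost p q ps f0 f1 \<beta> lam)" for t
  have "(\<lambda>t. \<beta> * mean_age (1, 0) (Suc t) + (1 - \<beta>) * mean_age (0, 1) (Suc t)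
             + lam * measure_pmf.expectation (law1 t) (\<lambda>v. transmit_prob (fst v)))
        \<longlonglongrightarrow> \<beta> * (pmf \<nu>1 (1, 0) / (1 - stay_prob 1)) + (1 - \<beta>) * (pmf \<nu>1 (0, 1) / (1 - stay_prob 0))
             + lam * measure_pmf.expectation \<nu>1 (\<lambda>v. transmit_prob (fst v))"
    using mean_age_tendsto[of "(1, 0)"] mean_age_tendsto[of "(0, 1)"]
    by (intro tendsto_intros LIMSEQ_Suc expectation_law1_tendsto) (simp_all add: S1_def)
  moreover have "a = (\<lambda>t. \<beta> * mean_age (1, 0) (Suc t) + (1 - \<beta>) * mean_age (0, 1) (Suc t)
             + lam * measure_pmf.expectation (law1 t) (\<lambda>v. transmit_prob (fst v)))"
    by (simp add: fun_eq_iff a_def expectation_law2_stage_cost del: One_nat_def)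
  ultimately have "a \<longlonglongrightarrow> ?L"
    by (simp add: mean_age_limits expectation_\<nu>1_transmit_prob mult.assoc del: One_nat_def)
  then have "(\<lambda>T. (1 / real T) * (\<Sum>t<T. a t)) \<longlonglongrightarrow> ?L"
    by (rule cesaro_mean_tendsto)
  moreover have "(\<Sum>t = 1..T. a (t - 1)) = (\<Sum>t<T. a t)" for T
    by (induction T) auto
  ultimately show ?thesis
    unfolding avg_cost_def a_def[symmetric]
    by (simp add: lim_imp_Limsup tendsto_ereal)
qed

lemma irreducible_mc2: "irreducible_on mc2 S2"
  using closed_S2 uniformly_reachable_mc2 by (rule irreducible_on_if_uniformly_reachable)

lemma positive_recurrent_mc2: "positive_recurrent_on mc2 S2"
  using uniformly_reachable_mc2 by (rule positive_recurrent_on_if_uniformly_reachable)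

lemma passage_time_mc2_finite: "passage_time mc2 (0, 0, 0) i < \<infinity>"
  by (rule passage_time_finite[OF uniformly_reachable_mc2]) (simp add: S2_def)

lemma passage_cost_mc2_finite:
  assumes "0 \<le> \<beta>" "\<beta> \<le> 1" "0 \<le> lam"
  shows "passage_cost mc2 (0, 0, 0) (\<lambda>s. ennreal (exp_stage_cost p q ps f0 f1 \<beta> lam s)) i < \<infinity>"
proof (rule passage_cost_finite[where h = "\<lambda>s. snd (snd s)" and b = 1, OF \<delta>_pos mc2_minorization])
  show "exp_stage_cost p q ps f0 f1 \<beta> lam s \<le> (1 + lam) + 1 * real (snd (snd s))" for s
    using exp_stage_cost_le[OF assms, of "fst s" "fst (snd s)" "snd (snd s)"] by simp
  show "snd (snd y) \<le> Suc (snd (snd s))" if "y \<in> set_pmf (mc2 s)" for s y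
    using that by (cases s) (auto simp: mc2_eq_map_mc1 age_update_def)
qed (use assms in auto)

end

theorem proposition1:
  fixes p q ps f0 f1 \<beta> lam :: real
  assumes hp: "0 < p" "p < 1"
    and hq: "0 < q" "q < 1"
    and hps: "0 < ps" "ps \<le> 1"
    and hf0: "0 < f0" "f0 \<le> 1" "ps * f0 < 1"
    and hf1: "0 < f1" "f1 \<le> 1" "ps * f1 < 1"
    and h\<beta>: "0 \<le> \<beta>" "\<beta> \<le> 1"
    and hlam: "0 \<le> lam"
  shows
    \<comment> \<open>(i) MC1\<close>
    "(finite S1 \<and> ergodic_on (K1 p q ps f0 f1) S1 \<and>
      (\<exists>\<nu>. stationary_on (K1 p q ps f0 f1) S1 \<nu> \<and>
           pmf \<nu> (0, 0) = nu00 p q (ps * f0) (ps * f1) \<and> pmf \<nu> (0, 1) = nu01 p q (ps * f0) (ps * f1) \<and>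
           pmf \<nu> (1, 0) = nu10 p q (ps * f0) (ps * f1) \<and> pmf \<nu> (1, 1) = nu11 p q (ps * f0) (ps * f1)))
    \<comment> \<open>(ii) MC2\<close>
   \<and> (countable S2 \<and> irreducible_on (K2 p q ps f0 f1) S2 \<and>
      positive_recurrent_on (K2 p q ps f0 f1) S2 \<and>
      (\<exists>\<nu>. stationary_on (K2 p q ps f0 f1) S2 \<nu> \<and>
           pmf \<nu> (0, 0, 0) = nu00 p q (ps * f0) (ps * f1) \<and> pmf \<nu> (1, 1, 0) = nu11 p q (ps * f0) (ps * f1) \<and>
           (\<forall>k\<ge>1. pmf \<nu> (1, 0, k) = p * (1 - ps * f0) * ((1 - q) * (1 - ps * f1)) ^ (k - 1) * nu00 p q (ps * f0) (ps * f1)) \<and>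
           (\<forall>k\<ge>1. pmf \<nu> (0, 1, k) = q * (1 - ps * f1) * ((1 - p) * (1 - ps * f0)) ^ (k - 1) * nu11 p q (ps * f0) (ps * f1))) \<and>
      avg_cost p q ps f0 f1 \<beta> lam =
        ereal (\<beta> * p * (1 - ps * f0) * nu00 p q (ps * f0) (ps * f1) / (1 - (1 - q) * (1 - ps * f1))\<^sup>2
             + (1 - \<beta>) * q * (1 - ps * f1) * nu11 p q (ps * f0) (ps * f1) / (1 - (1 - p) * (1 - ps * f0))\<^sup>2
             + lam * (q * f0 + p * f1) / (p + q)))
    \<comment> \<open>(iii) and (iv)\<close>
   \<and> (\<exists>z\<in>S2.
        (\<forall>i\<in>S2 - {z}. passage_time (K2 p q ps f0 f1) z i < \<infinity>) \<and>
        (\<forall>i\<in>S2 - {z}. passage_cost (K2 p q ps f0 f1) z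
                          (\<lambda>s. ennreal (exp_stage_cost p q ps f0 f1 \<beta> lam s)) i < \<infinity>))"
proof -
  interpret age_agnostic_policy p q ps f0 f1
    using hp hq hps hf0 hf1 by unfold_locales
  have "(0, 0, 0) \<in> S2" by (simp add: S2_def)
  then show ?thesis
    using ergodic_mc1 stationary_\<nu>1 pmf_\<nu>1 irreducible_mc2 positive_recurrent_mc2
      stationary_\<nu>2 pmf_\<nu>2_closed_form(1,2) pmf_\<nu>2_age avg_cost_eq
      passage_time_mc2_finite passage_cost_mc2_finite[OF h\<beta> hlam]
    by (auto simp: S1_eq intro!: exI[of _ \<nu>1] exI[of _ \<nu>2] bexI[of _ "(0, 0, 0)"] countableI_type)
qed

end
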